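(* There is an absolute constant $C$ such that the following holds. Let $\mathcal V_1,\mathcal V_2\subseteq\mathbb R^n$ be subspaces of dimensions $k_1,k_2$ with $\mathcal V_1\cap\mathcal V_2=\mathcal W$, $\dim\mathcal W=m$. Let $M=\mathrm{proj}(\mathcal V_1)+\mathrm{proj}(\mathcal V_2)$ and suppose $\lambda_{k_1+k_2-m}(M)>\delta$. Let $\tilde{\mathcal V}_1,\tilde{\mathcal V}_2$ be subspaces of dimensions $k_1,k_2$ with $\|\mathrm{proj}(\mathcal V_i)-\mathrm{proj}(\tilde{\mathcal V}_i)\|_F\le\gamma$ for $i=1,2$. Let $\tilde{\mathcal W}$ be the span of the top $m$ eigenvectors of $\tilde M=\mathrm{proj}(\tilde{\mathcal V}_1)+\mathrm{proj}(\tilde{\mathcal V}_2)$. Then $\|\mathrm{proj}(\mathcal W)-\mathrm{proj}(\tilde{\mathcal W})\|_F\le C\gamma/\delta$.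
   Context: $\mathrm{proj}(\mathcal U)$ is the orthogonal projection matrix onto subspace $\mathcal U$; $\lambda_k$ denotes the $k$-th largest eigenvalue; $\|\cdot\|_F$ is the Frobenius norm. *)

theory Defs
  imports "Jordan_Normal_Form.VS_Connect" "Jordan_Normal_Form.Char_Poly"
begin

text \<open>Euclidean space R^n is rendered as carrier_vec n of real vectors (Jordan_Normal_Form),
  so that the dimension n is an ordinary value and the constant C can be chosen
  independently of n.\<close>

definition rsubspace :: "nat \<Rightarrow> real vec set \<Rightarrow> bool" where
  "rsubspace n W = VectorSpace.subspace (class_ring :: real ring) W (module_vec TYPE(real) n)"

definition rdim :: "nat \<Rightarrow> real vec set \<Rightarrow> nat" where
  "rdim n W = vectorspace.dim (class_ring :: real ring) ((module_vec TYPE(real) n)\<lparr>carrier := W\<rparr>)"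

definition rspan :: "nat \<Rightarrow> real vec set \<Rightarrow> real vec set" where
  "rspan n S = LinearCombinations.module.span (class_ring :: real ring) (module_vec TYPE(real) n) S"

definition orth_proj :: "nat \<Rightarrow> real vec set \<Rightarrow> real vec \<Rightarrow> real vec" where
  "orth_proj n W x = (THE y. y \<in> W \<and> (\<forall>w\<in>W. (x - y) \<bullet> w = 0))"

definition proj :: "nat \<Rightarrow> real vec set \<Rightarrow> real mat" where
  "proj n W = mat n n (\<lambda>(i,j). orth_proj n W (unit_vec n j) $ i)"

definition frob_norm :: "real mat \<Rightarrow> real" where
  "frob_norm A = sqrt (\<Sum>i<dim_row A. \<Sum>j<dim_col A. (A $$ (i,j))^2)"

text \<open>Eigenvalues (with multiplicity) in non-increasing order, for a matrix whose
  characteristic polynomial splits over the reals (e.g. a symmetric real matrix).\<close>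
definition eigs_desc :: "real mat \<Rightarrow> real list" where
  "eigs_desc A = (SOME xs. sorted_wrt (\<ge>) xs \<and> char_poly A = (\<Prod>x\<leftarrow>xs. [:- x, 1:]))"

text \<open>lambda_k = k-th largest eigenvalue (1-based).\<close>
definition eig :: "nat \<Rightarrow> real mat \<Rightarrow> real" where
  "eig k A = eigs_desc A ! (k - 1)"

end

theory Submission
  imports Defs
begin

text \<open>Write \<open>P\<^sub>1, P\<^sub>2\<close> for the projections onto \<open>\<V>\<^sub>1, \<V>\<^sub>2\<close>, \<open>M = P\<^sub>1 + P\<^sub>2\<close>,
  \<open>d = k\<^sub>1 + k\<^sub>2 - m\<close>, and \<open>Q, Q'\<close> for the projections onto \<open>\<W>\<close> and \<open>\<W>'\<close>.
  The spectrum of \<open>M\<close> lies in \<open>[0, 2]\<close>, its eigenspace for the eigenvalue \<open>2\<close> is \<open>\<W>\<close>, its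
  eigenvalues beyond the \<open>d\<close>-th vanish, and every eigenvalue \<open>e \<in> (0, 2)\<close> comes with the
  eigenvalue \<open>2 - e\<close> (if \<open>x\<close> is an eigenvector, so is \<open>P\<^sub>1x - P\<^sub>2x\<close>), so \<open>2 - e \<ge> \<lambda>\<^sub>d(M) > \<delta>\<close>.
  Hence \<open>M \<le> 2 - \<delta>\<close> on \<open>\<W>\<^sup>\<bottom>\<close>, which gives \<open>tr(MQ') \<le> 2m - \<delta>(m - tr(QQ'))\<close>, while
  \<open>tr(MQ) = 2m\<close> and, by Ky Fan's maximum principle for \<open>M' = P\<^sub>1' + P\<^sub>2'\<close>, \<open>tr(M'Q) \<le> tr(M'Q')\<close>.
  Adding up, \<open>\<delta>/2 \<cdot> \<parallel>Q - Q'\<parallel>\<^sup>2 = \<delta>(m - tr(QQ')) \<le> \<langle>M - M', Q - Q'\<rangle> \<le> 2\<gamma> \<parallel>Q - Q'\<parallel>\<close>,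
  so the theorem holds with \<open>C = 4\<close>.\<close>

section \<open>Orthonormal families\<close>

definition orthonormal :: "nat \<Rightarrow> nat \<Rightarrow> (nat \<Rightarrow> real vec) \<Rightarrow> bool" where
  "orthonormal n k b \<longleftrightarrow> (\<forall>i<k. b i \<in> carrier_vec n) \<and> (\<forall>i<k. \<forall>j<k. b i \<bullet> b j = (if i = j then 1 else 0))"

definition fam_lincomb :: "nat \<Rightarrow> nat \<Rightarrow> (nat \<Rightarrow> real vec) \<Rightarrow> (nat \<Rightarrow> real) \<Rightarrow> real vec" where
  "fam_lincomb n k b c = vec n (\<lambda>i. \<Sum>j<k. c j * b j $ i)"

definition fam_span :: "nat \<Rightarrow> nat \<Rightarrow> (nat \<Rightarrow> real vec) \<Rightarrow> real vec set" where
  "fam_span n k b = range (fam_lincomb n k b)"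

definition fam_proj :: "nat \<Rightarrow> nat \<Rightarrow> (nat \<Rightarrow> real vec) \<Rightarrow> real vec \<Rightarrow> real vec" where
  "fam_proj n k b x = fam_lincomb n k b (\<lambda>j. x \<bullet> b j)"

definition normalize_vec :: "real vec \<Rightarrow> real vec" where
  "normalize_vec r = (1 / sqrt (r \<bullet> r)) \<cdot>\<^sub>v r"

lemma scalar_prod_sum: "x \<in> carrier_vec n \<Longrightarrow> y \<in> carrier_vec n \<Longrightarrow> x \<bullet> y = (\<Sum>i<n. x $ i * y $ i)"
  unfolding scalar_prod_def by (auto simp: lessThan_atLeast0)

lemma scalar_prod_self_nonneg: "(x :: real vec) \<bullet> x \<ge> 0"
  unfolding scalar_prod_def by (auto intro!: sum_nonneg)

lemma scalar_prod_self_eq_0D: "(x :: real vec) \<in> carrier_vec n \<Longrightarrow> x \<bullet> x = 0 \<Longrightarrow> x = 0\<^sub>v n"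
proof -
  assume x: "x \<in> carrier_vec n" and z: "x \<bullet> x = 0"
  have "(\<Sum>i<n. x $ i * x $ i) = 0" using z x by (simp add: scalar_prod_sum)
  hence "\<forall>i\<in>{..<n}. x $ i * x $ i = 0" by (subst (asm) sum_nonneg_eq_0_iff) auto
  thus ?thesis using x by (intro eq_vecI) auto
qed

lemma scalar_prod_self_pos: "(x :: real vec) \<in> carrier_vec n \<Longrightarrow> x \<noteq> 0\<^sub>v n \<Longrightarrow> x \<bullet> x > 0"
  using scalar_prod_self_nonneg[of x] scalar_prod_self_eq_0D[of x n] by fastforce

lemma scalar_prod_diff_self:
  "(x :: real vec) \<in> carrier_vec n \<Longrightarrow> y \<in> carrier_vec n \<Longrightarrow> (x - y) \<bullet> (x - y) = x \<bullet> x - 2 * (x \<bullet> y) + y \<bullet> y"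
  by (simp add: minus_scalar_prod_distrib[of _ n] scalar_prod_minus_distrib[of _ n] comm_scalar_prod[of y n x])

lemma normalize_vec_carrier[simp]: "r \<in> carrier_vec n \<Longrightarrow> normalize_vec r \<in> carrier_vec n"
  unfolding normalize_vec_def by simp

lemma normalize_vec_unit:
  assumes r: "r \<in> carrier_vec n" "r \<noteq> 0\<^sub>v n"
  shows "normalize_vec r \<bullet> normalize_vec r = 1"
proof -
  have pos: "r \<bullet> r > 0" using scalar_prod_self_pos[OF r] .
  have "normalize_vec r \<bullet> normalize_vec r = (r \<bullet> r) / (sqrt (r \<bullet> r) * sqrt (r \<bullet> r))"
    using r unfolding normalize_vec_def by simp
  also have "sqrt (r \<bullet> r) * sqrt (r \<bullet> r) = r \<bullet> r" using pos by simp
  finally show ?thesis using pos by simp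
qed

lemma scalar_prod_normalize_vec:
  "x \<in> carrier_vec n \<Longrightarrow> r \<in> carrier_vec n \<Longrightarrow> x \<bullet> normalize_vec r = (x \<bullet> r) / sqrt (r \<bullet> r)"
  unfolding normalize_vec_def by simp

lemma normalize_vec_rescale:
  assumes r: "r \<in> carrier_vec n" "r \<noteq> 0\<^sub>v n"
  shows "sqrt (r \<bullet> r) \<cdot>\<^sub>v normalize_vec r = r"
  using scalar_prod_self_pos[OF r] unfolding normalize_vec_def by (simp add: smult_smult_assoc)

lemma fam_lincomb_carrier[simp]: "fam_lincomb n k b c \<in> carrier_vec n"
  unfolding fam_lincomb_def by simp

lemma fam_lincomb_dim[simp]: "dim_vec (fam_lincomb n k b c) = n"
  unfolding fam_lincomb_def by simp

lemma fam_lincomb_index[simp]: "i < n \<Longrightarrow> fam_lincomb n k b c $ i = (\<Sum>j<k. c j * b j $ i)"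
  unfolding fam_lincomb_def by simp

lemma fam_lincomb_cong:
  "(\<And>j. j < k \<Longrightarrow> c j = d j) \<Longrightarrow> (\<And>j. j < k \<Longrightarrow> b j = b' j) \<Longrightarrow> fam_lincomb n k b c = fam_lincomb n k b' d"
  unfolding fam_lincomb_def by (intro eq_vecI) auto

lemma fam_lincomb_0: "fam_lincomb n 0 b c = 0\<^sub>v n"
  by (rule eq_vecI) auto

lemma fam_lincomb_add: "fam_lincomb n k b c + fam_lincomb n k b d = fam_lincomb n k b (\<lambda>j. c j + d j)"
  by (rule eq_vecI) (auto simp: sum.distrib algebra_simps)

lemma fam_lincomb_smult: "a \<cdot>\<^sub>v fam_lincomb n k b c = fam_lincomb n k b (\<lambda>j. a * c j)"
  by (rule eq_vecI) (auto simp: sum_distrib_left algebra_simps)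

lemma fam_lincomb_Suc: "b k \<in> carrier_vec n \<Longrightarrow> fam_lincomb n (Suc k) b c = fam_lincomb n k b c + c k \<cdot>\<^sub>v b k"
  by (intro eq_vecI) auto

lemma fam_lincomb_Suc_shift:
  "z 0 \<in> carrier_vec n \<Longrightarrow>
   fam_lincomb n (Suc p) z c = c 0 \<cdot>\<^sub>v z 0 + fam_lincomb n p (\<lambda>a. z (Suc a)) (\<lambda>a. c (Suc a))"
  by (intro eq_vecI) (auto simp del: sum.lessThan_Suc simp add: sum.lessThan_Suc_shift)

lemma fam_lincomb_unit:
  assumes i: "i < k" and b: "b i \<in> carrier_vec n"
  shows "fam_lincomb n k b (\<lambda>j. if j = i then 1 else 0) = b i"
proof (rule eq_vecI)
  fix l assume "l < dim_vec (b i)"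
  hence l: "l < n" using b by simp
  have "(\<Sum>j<k. (if j = i then 1 else 0) * b j $ l) = (\<Sum>j<k. if j = i then b j $ l else 0)"
    by (intro sum.cong refl) simp
  also have "\<dots> = b i $ l" using i by simp
  finally show "fam_lincomb n k b (\<lambda>j. if j = i then 1 else 0) $ l = b i $ l" using l by simp
qed (use b in simp)

lemma fam_lincomb_extend:
  assumes "\<And>j. j < k \<Longrightarrow> b' j = b j" "k \<le> k'"
  shows "fam_lincomb n k b c = fam_lincomb n k' b' (\<lambda>j. if j < k then c j else 0)"
proof (rule eq_vecI)
  fix i assume "i < dim_vec (fam_lincomb n k' b' (\<lambda>j. if j < k then c j else 0))"
  hence i: "i < n" by simp
  have "(\<Sum>j<k'. (if j < k then c j else 0) * b' j $ i) = (\<Sum>j<k. (if j < k then c j else 0) * b' j $ i)"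
    using assms(2) by (intro sum.mono_neutral_right) auto
  thus "fam_lincomb n k b c $ i = fam_lincomb n k' b' (\<lambda>j. if j < k then c j else 0) $ i"
    using i assms(1) by simp
qed simp

lemma fam_lincomb_scalar_prod:
  assumes b: "\<And>j. j < k \<Longrightarrow> b j \<in> carrier_vec n" and y: "y \<in> carrier_vec n"
  shows "fam_lincomb n k b c \<bullet> y = (\<Sum>j<k. c j * (b j \<bullet> y))"
proof -
  have "fam_lincomb n k b c \<bullet> y = (\<Sum>i<n. (\<Sum>j<k. c j * b j $ i) * y $ i)"
    by (subst scalar_prod_sum[OF fam_lincomb_carrier y], intro sum.cong refl, simp)
  also have "\<dots> = (\<Sum>j<k. c j * (\<Sum>i<n. b j $ i * y $ i))"
    by (simp add: sum_distrib_left sum_distrib_right sum.swap[of _ "{..<n}"] mult.assoc)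
  also have "\<dots> = (\<Sum>j<k. c j * (b j \<bullet> y))"
    using b y by (intro sum.cong refl) (simp add: scalar_prod_sum[of "b _" n y])
  finally show ?thesis .
qed

lemma scalar_prod_fam_lincomb:
  assumes b: "\<And>j. j < k \<Longrightarrow> b j \<in> carrier_vec n" and y: "y \<in> carrier_vec n"
  shows "y \<bullet> fam_lincomb n k b c = (\<Sum>j<k. c j * (y \<bullet> b j))"
proof -
  have "y \<bullet> fam_lincomb n k b c = fam_lincomb n k b c \<bullet> y" using y by (simp add: comm_scalar_prod[of _ n])
  also have "\<dots> = (\<Sum>j<k. c j * (b j \<bullet> y))" by (rule fam_lincomb_scalar_prod[OF b y])
  also have "\<dots> = (\<Sum>j<k. c j * (y \<bullet> b j))"
    using b y by (intro sum.cong refl) (simp add: comm_scalar_prod[of _ n])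
  finally show ?thesis .
qed

lemma orthonormal_coeff:
  assumes o: "orthonormal n k b" and i: "i < k"
  shows "b i \<bullet> fam_lincomb n k b c = c i"
proof -
  have "b i \<bullet> fam_lincomb n k b c = (\<Sum>j<k. c j * (b i \<bullet> b j))"
    using o i by (intro scalar_prod_fam_lincomb) (auto simp: orthonormal_def)
  also have "\<dots> = (\<Sum>j<k. if j = i then c j else 0)"
    using o i by (intro sum.cong refl) (auto simp: orthonormal_def)
  also have "\<dots> = c i" using i by simp
  finally show ?thesis .
qed

lemma orthonormal_insert:
  assumes o: "orthonormal n j v" and u: "u \<in> carrier_vec n" and ou: "\<forall>k<j. v k \<bullet> u = 0" and uu: "u \<bullet> u = 1"
  shows "orthonormal n (Suc j) (v(j := u))"
  unfolding orthonormal_def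
proof (intro conjI allI impI)
  fix i assume "i < Suc j" thus "(v(j := u)) i \<in> carrier_vec n" using o u by (auto simp: orthonormal_def less_Suc_eq)
next
  fix i l assume i: "i < Suc j" and l: "l < Suc j"
  have vc: "\<And>k. k < j \<Longrightarrow> v k \<in> carrier_vec n" using o by (simp add: orthonormal_def)
  have uo: "\<And>k. k < j \<Longrightarrow> u \<bullet> v k = 0" using ou vc u by (simp add: comm_scalar_prod[of _ n])
  show "(v(j := u)) i \<bullet> (v(j := u)) l = (if i = l then 1 else 0)"
    using i l o ou uo uu by (auto simp: orthonormal_def less_Suc_eq)
qed

lemma orthonormal_inj: "orthonormal n k b \<Longrightarrow> inj_on b {..<k}"
  unfolding inj_on_def orthonormal_def by (metis lessThan_iff zero_neq_one)

lemma orthonormal_nonzero: "orthonormal n k b \<Longrightarrow> i < k \<Longrightarrow> b i \<noteq> 0\<^sub>v n"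
  unfolding orthonormal_def by force

lemma fam_span_mono:
  assumes "\<And>j. j < k \<Longrightarrow> b' j = b j" "k \<le> k'"
  shows "fam_span n k b \<subseteq> fam_span n k' b'"
proof
  fix y assume "y \<in> fam_span n k b"
  then obtain c where "y = fam_lincomb n k b c" unfolding fam_span_def by auto
  hence "y = fam_lincomb n k' b' (\<lambda>j. if j < k then c j else 0)" using fam_lincomb_extend[OF assms] by simp
  thus "y \<in> fam_span n k' b'" unfolding fam_span_def by simp
qed

lemma orthonormal_in_fam_span: "orthonormal n k b \<Longrightarrow> i < k \<Longrightarrow> b i \<in> fam_span n k b"
  using fam_lincomb_unit[of i k b n] unfolding fam_span_def orthonormal_def by (metis rangeI)

lemma fam_proj_in_span: "fam_proj n k b x \<in> fam_span n k b"
  unfolding fam_proj_def fam_span_def by simp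

lemma fam_proj_carrier[simp]: "fam_proj n k b x \<in> carrier_vec n"
  unfolding fam_proj_def by simp

lemma fam_proj_dim[simp]: "dim_vec (fam_proj n k b x) = n"
  unfolding fam_proj_def by simp

lemma fam_proj_residual_orth:
  assumes o: "orthonormal n k b" and x: "x \<in> carrier_vec n" and i: "i < k"
  shows "(x - fam_proj n k b x) \<bullet> b i = 0"
proof -
  have bi: "b i \<in> carrier_vec n" using o i by (simp add: orthonormal_def)
  have "fam_proj n k b x \<bullet> b i = b i \<bullet> fam_proj n k b x"
    using bi by (simp add: comm_scalar_prod[of _ n])
  also have "\<dots> = x \<bullet> b i" unfolding fam_proj_def using o i by (simp add: orthonormal_coeff)
  finally show ?thesis using x bi by (simp add: minus_scalar_prod_distrib[of _ n])
qed

lemma fam_proj_residual_orth_span: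
  assumes o: "orthonormal n k b" and x: "x \<in> carrier_vec n" and y: "y \<in> fam_span n k b"
  shows "(x - fam_proj n k b x) \<bullet> y = 0"
proof -
  obtain c where y: "y = fam_lincomb n k b c" using y unfolding fam_span_def by auto
  have "(x - fam_proj n k b x) \<bullet> y = (\<Sum>j<k. c j * ((x - fam_proj n k b x) \<bullet> b j))"
    unfolding y using o x by (intro scalar_prod_fam_lincomb) (auto simp: orthonormal_def)
  also have "\<dots> = 0" using fam_proj_residual_orth[OF o x] by simp
  finally show ?thesis .
qed

lemma fam_proj_quad_form:
  "orthonormal n k b \<Longrightarrow> x \<in> carrier_vec n \<Longrightarrow> x \<bullet> fam_proj n k b x = (\<Sum>j<k. (x \<bullet> b j)^2)"
  unfolding fam_proj_def by (subst scalar_prod_fam_lincomb) (auto simp: orthonormal_def power2_eq_square)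

lemma orthonormal_pythagoras:
  assumes o: "orthonormal n k b" and x: "x \<in> carrier_vec n"
  shows "x \<bullet> x = (\<Sum>j<k. (x \<bullet> b j)^2) + (x - fam_proj n k b x) \<bullet> (x - fam_proj n k b x)"
proof -
  let ?p = "fam_proj n k b x"
  have "?p \<bullet> (x - ?p) = 0"
    using fam_proj_residual_orth_span[OF o x fam_proj_in_span] x by (simp add: comm_scalar_prod[of _ n])
  hence "?p \<bullet> ?p = x \<bullet> ?p" using x by (simp add: scalar_prod_minus_distrib[of _ n] comm_scalar_prod[of _ n])
  thus ?thesis using scalar_prod_diff_self[OF x fam_proj_carrier, of k b] fam_proj_quad_form[OF o x] by simp
qed

lemma bessel_inequality:
  assumes o: "orthonormal n k b" and x: "x \<in> carrier_vec n"
  shows "(\<Sum>j<k. (x \<bullet> b j)^2) \<le> x \<bullet> x"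
  using orthonormal_pythagoras[OF o x] scalar_prod_self_nonneg[of "x - fam_proj n k b x"] by linarith

lemma fam_proj_id:
  assumes o: "orthonormal n k b" and x: "x \<in> fam_span n k b"
  shows "fam_proj n k b x = x"
proof -
  obtain c where xc: "x = fam_lincomb n k b c" using x unfolding fam_span_def by auto
  have "fam_lincomb n k b (\<lambda>j. x \<bullet> b j) = fam_lincomb n k b c"
  proof (rule fam_lincomb_cong)
    fix j assume j: "j < k"
    hence "x \<bullet> b j = b j \<bullet> x" using o xc by (simp add: comm_scalar_prod[of _ n] orthonormal_def)
    thus "x \<bullet> b j = c j" using xc o j by (simp add: orthonormal_coeff)
  qed simp
  thus ?thesis using xc unfolding fam_proj_def by simp
qed

lemma fam_proj_idem: "orthonormal n k b \<Longrightarrow> fam_proj n k b (fam_proj n k b x) = fam_proj n k b x"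
  using fam_proj_id fam_proj_in_span by blast

lemma fam_proj_eq_self_iff:
  assumes o: "orthonormal n k b" and x: "x \<in> carrier_vec n"
  shows "x \<in> fam_span n k b \<longleftrightarrow> (\<Sum>j<k. (x \<bullet> b j)^2) = x \<bullet> x"
proof
  assume "(\<Sum>j<k. (x \<bullet> b j)^2) = x \<bullet> x"
  hence "(x - fam_proj n k b x) \<bullet> (x - fam_proj n k b x) = 0" using orthonormal_pythagoras[OF o x] by simp
  hence "x - fam_proj n k b x = 0\<^sub>v n" using scalar_prod_self_eq_0D[of _ n] x by simp
  moreover have "x = (x - fam_proj n k b x) + fam_proj n k b x" using x by (intro eq_vecI) auto
  ultimately have "x = fam_proj n k b x" using x by simp
  thus "x \<in> fam_span n k b" using fam_proj_in_span by metis
next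
  assume "x \<in> fam_span n k b"
  thus "(\<Sum>j<k. (x \<bullet> b j)^2) = x \<bullet> x" using orthonormal_pythagoras[OF o x] fam_proj_id[OF o] x by simp
qed

lemma parseval:
  "orthonormal n k b \<Longrightarrow> x \<in> fam_span n k b \<Longrightarrow> x \<bullet> x = (\<Sum>j<k. (x \<bullet> b j)^2)"
  using fam_proj_eq_self_iff[of n k b x] unfolding fam_span_def by auto

lemma parseval_scalar_prod:
  assumes o: "orthonormal n k b" and x: "x \<in> carrier_vec n" and y: "y \<in> fam_span n k b"
  shows "x \<bullet> y = (\<Sum>j<k. (x \<bullet> b j) * (y \<bullet> b j))"
proof -
  have "x \<bullet> y = x \<bullet> fam_proj n k b y" using fam_proj_id[OF o y] by simp
  also have "\<dots> = (\<Sum>j<k. (y \<bullet> b j) * (x \<bullet> b j))" unfolding fam_proj_def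
    using o x by (intro scalar_prod_fam_lincomb) (auto simp: orthonormal_def)
  finally show ?thesis by (simp add: mult.commute)
qed

lemma fam_proj_smult:
  "orthonormal n k b \<Longrightarrow> x \<in> carrier_vec n \<Longrightarrow> fam_proj n k b (a \<cdot>\<^sub>v x) = a \<cdot>\<^sub>v fam_proj n k b x"
  unfolding fam_proj_def fam_lincomb_smult by (intro fam_lincomb_cong refl) (auto simp: orthonormal_def)

lemma fam_proj_diff:
  assumes o: "orthonormal n k b" and x: "x \<in> carrier_vec n" and y: "y \<in> carrier_vec n"
  shows "fam_proj n k b (x - y) = fam_proj n k b x - fam_proj n k b y"
proof (rule eq_vecI)
  fix i assume "i < dim_vec (fam_proj n k b x - fam_proj n k b y)"
  hence i: "i < n" by simp
  have "(\<Sum>j<k. ((x - y) \<bullet> b j) * b j $ i) = (\<Sum>j<k. (x \<bullet> b j) * b j $ i - (y \<bullet> b j) * b j $ i)"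
    using o x y by (intro sum.cong refl) (auto simp: orthonormal_def minus_scalar_prod_distrib[of _ n] algebra_simps)
  thus "fam_proj n k b (x - y) $ i = (fam_proj n k b x - fam_proj n k b y) $ i"
    using i unfolding fam_proj_def by (simp add: sum_subtractf)
qed simp

lemma fam_proj_symmetric:
  assumes o: "orthonormal n k b" and x: "x \<in> carrier_vec n" and y: "y \<in> carrier_vec n"
  shows "x \<bullet> fam_proj n k b y = fam_proj n k b x \<bullet> y"
proof -
  have bc: "\<And>j. j < k \<Longrightarrow> b j \<in> carrier_vec n" using o by (simp add: orthonormal_def)
  have "x \<bullet> fam_proj n k b y = (\<Sum>j<k. (y \<bullet> b j) * (x \<bullet> b j))"
    unfolding fam_proj_def using bc x by (rule scalar_prod_fam_lincomb)
  also have "\<dots> = (\<Sum>j<k. (x \<bullet> b j) * (b j \<bullet> y))"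
    using bc y by (intro sum.cong refl) (simp add: comm_scalar_prod[of _ n])
  also have "\<dots> = fam_proj n k b x \<bullet> y" unfolding fam_proj_def using bc y by (rule fam_lincomb_scalar_prod[symmetric])
  finally show ?thesis .
qed

lemma orthonormal_card_eq_sum_coords:
  assumes o: "orthonormal n k b"
  shows "real k = (\<Sum>i<n. \<Sum>j<k. (unit_vec n i \<bullet> b j)^2)"
proof -
  have "real k = (\<Sum>j<k. b j \<bullet> b j)" using o by (simp add: orthonormal_def)
  also have "\<dots> = (\<Sum>j<k. \<Sum>i<n. (unit_vec n i \<bullet> b j)^2)"
  proof (intro sum.cong refl)
    fix j assume "j \<in> {..<k}"
    hence bj: "b j \<in> carrier_vec n" using o by (simp add: orthonormal_def)
    have "b j \<bullet> b j = (\<Sum>i<n. b j $ i * b j $ i)" using bj by (simp add: scalar_prod_sum)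
    also have "\<dots> = (\<Sum>i<n. (unit_vec n i \<bullet> b j)^2)"
      using bj by (intro sum.cong refl) (simp add: power2_eq_square)
    finally show "b j \<bullet> b j = (\<Sum>i<n. (unit_vec n i \<bullet> b j)^2)" .
  qed
  finally show ?thesis by (simp add: sum.swap[of _ "{..<k}"])
qed

lemma orthonormal_le_dim: assumes o: "orthonormal n k b" shows "k \<le> n"
proof -
  have "real k \<le> (\<Sum>i<n. 1)"
    unfolding orthonormal_card_eq_sum_coords[OF o]
    by (intro sum_mono order.trans[OF bessel_inequality[OF o]]) auto
  thus ?thesis by simp
qed

lemma orthonormal_extend_residual:
  assumes o: "orthonormal n k b" and x: "x \<in> carrier_vec n" and nx: "x \<notin> fam_span n k b"
  defines "r \<equiv> x - fam_proj n k b x"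
  shows "orthonormal n (Suc k) (b(k := normalize_vec r))" "x \<in> fam_span n (Suc k) (b(k := normalize_vec r))"
proof -
  have r: "r \<in> carrier_vec n" unfolding r_def using x by simp
  have xe: "x = fam_proj n k b x + r" unfolding r_def using x by (intro eq_vecI) auto
  have r0: "r \<noteq> 0\<^sub>v n"
  proof
    assume "r = 0\<^sub>v n"
    hence "x = fam_proj n k b x" using xe by simp
    thus False using nx fam_proj_in_span by metis
  qed
  have "\<forall>i<k. b i \<bullet> normalize_vec r = 0"
    using o r fam_proj_residual_orth[OF o x]
    by (auto simp: scalar_prod_normalize_vec orthonormal_def comm_scalar_prod[of _ n] r_def)
  thus "orthonormal n (Suc k) (b(k := normalize_vec r))"
    using orthonormal_insert[OF o] normalize_vec_unit[OF r r0] r by simp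
  let ?b' = "b(k := normalize_vec r)"
  let ?c = "\<lambda>j. if j < k then x \<bullet> b j else sqrt (r \<bullet> r)"
  have "x = fam_lincomb n k b (\<lambda>j. x \<bullet> b j) + sqrt (r \<bullet> r) \<cdot>\<^sub>v normalize_vec r"
    using xe normalize_vec_rescale[OF r r0] unfolding fam_proj_def by simp
  also have "fam_lincomb n k b (\<lambda>j. x \<bullet> b j) = fam_lincomb n k ?b' ?c" by (rule fam_lincomb_cong) auto
  also have "fam_lincomb n k ?b' ?c + sqrt (r \<bullet> r) \<cdot>\<^sub>v normalize_vec r = fam_lincomb n (Suc k) ?b' ?c"
    using r by (subst fam_lincomb_Suc) auto
  finally show "x \<in> fam_span n (Suc k) (b(k := normalize_vec r))" unfolding fam_span_def by simp
qed

lemma orthonormal_extend_list: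
  assumes "orthonormal n k b" "set xs \<subseteq> carrier_vec n"
  shows "\<exists>k' b'. k \<le> k' \<and> k' \<le> k + length xs \<and> orthonormal n k' b' \<and> (\<forall>j<k. b' j = b j) \<and>
    set xs \<subseteq> fam_span n k' b'"
  using assms
proof (induction xs arbitrary: k b)
  case Nil thus ?case by auto
next
  case (Cons x xs)
  have x: "x \<in> carrier_vec n" and xs: "set xs \<subseteq> carrier_vec n" using Cons.prems by auto
  obtain k1 b1 where e: "orthonormal n k1 b1" "x \<in> fam_span n k1 b1" "k \<le> k1" "k1 \<le> Suc k"
    "\<And>j. j < k \<Longrightarrow> b1 j = b j"
  proof (cases "x \<in> fam_span n k b")
    case True thus ?thesis using that[of k b] Cons.prems(1) by auto
  next
    case False thus ?thesis using that orthonormal_extend_residual[OF Cons.prems(1) x False] by fastforce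
  qed
  obtain k' b' where h: "k1 \<le> k'" "k' \<le> k1 + length xs" "orthonormal n k' b'" "\<forall>j<k1. b' j = b1 j"
    "set xs \<subseteq> fam_span n k' b'"
    using Cons.IH[OF e(1) xs] by blast
  have "fam_span n k1 b1 \<subseteq> fam_span n k' b'" using h(1,4) by (intro fam_span_mono) auto
  thus ?case using h e by (intro exI[of _ k'] exI[of _ b']) auto
qed

definition lin_closed :: "nat \<Rightarrow> real vec set \<Rightarrow> bool" where
  "lin_closed n V \<longleftrightarrow> V \<subseteq> carrier_vec n \<and> 0\<^sub>v n \<in> V \<and>
    (\<forall>x\<in>V. \<forall>y\<in>V. x + y \<in> V) \<and> (\<forall>a. \<forall>x\<in>V. a \<cdot>\<^sub>v x \<in> V)"

lemma lin_closed_minus: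
  assumes c: "lin_closed n V" and x: "x \<in> V" and y: "y \<in> V" shows "x - y \<in> V"
proof -
  have "x + (-1) \<cdot>\<^sub>v y = x - y" using c x y by (intro eq_vecI) (auto simp: lin_closed_def)
  moreover have "x + (-1) \<cdot>\<^sub>v y \<in> V" using c x y by (auto simp: lin_closed_def)
  ultimately show ?thesis by simp
qed

lemma lin_closed_carrier: "lin_closed n (carrier_vec n)"
  unfolding lin_closed_def by auto

lemma lin_closed_Int: "lin_closed n V \<Longrightarrow> lin_closed n W \<Longrightarrow> lin_closed n (V \<inter> W)"
  unfolding lin_closed_def by auto

lemma lin_closed_fam_lincomb:
  assumes c: "lin_closed n V" and b: "\<And>j. j < k \<Longrightarrow> b j \<in> V"
  shows "fam_lincomb n k b d \<in> V"
  using b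
proof (induction k)
  case 0 thus ?case using c by (simp add: fam_lincomb_0 lin_closed_def)
next
  case (Suc k)
  have "b k \<in> V" using Suc.prems by simp
  moreover have "fam_lincomb n k b d \<in> V" using Suc by simp
  ultimately show ?case using c by (simp add: fam_lincomb_Suc lin_closed_def subset_iff)
qed

lemma fam_span_subset: "lin_closed n V \<Longrightarrow> (\<And>j. j < k \<Longrightarrow> b j \<in> V) \<Longrightarrow> fam_span n k b \<subseteq> V"
  unfolding fam_span_def using lin_closed_fam_lincomb by blast

lemma lin_closed_fam_span: "lin_closed n (fam_span n k b)"
  unfolding lin_closed_def fam_span_def
proof (intro conjI ballI allI)
  show "0\<^sub>v n \<in> range (fam_lincomb n k b)" by (rule range_eqI[of _ _ "\<lambda>_. 0"]) (rule eq_vecI, auto)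
next
  fix x y assume "x \<in> range (fam_lincomb n k b)" "y \<in> range (fam_lincomb n k b)"
  thus "x + y \<in> range (fam_lincomb n k b)" by (auto simp: fam_lincomb_add)
next
  fix a x assume "x \<in> range (fam_lincomb n k b)"
  thus "a \<cdot>\<^sub>v x \<in> range (fam_lincomb n k b)" by (auto simp: fam_lincomb_smult)
qed auto

lemma orthonormal_extend_basis:
  assumes c: "lin_closed n V" and o: "orthonormal n k b" and bV: "\<forall>j<k. b j \<in> V"
  shows "\<exists>k' b'. k \<le> k' \<and> orthonormal n k' b' \<and> (\<forall>j<k. b' j = b j) \<and> (\<forall>j<k'. b' j \<in> V) \<and>
    fam_span n k' b' = V"
  using o bV
proof (induction "n - k" arbitrary: k b rule: less_induct)
  case less
  show ?case
  proof (cases "V \<subseteq> fam_span n k b")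
    case True
    have "fam_span n k b \<subseteq> V" using c less.prems(2) by (intro fam_span_subset) auto
    thus ?thesis using True less.prems by (intro exI[of _ k] exI[of _ b]) auto
  next
    case False
    then obtain x where xV: "x \<in> V" and nx: "x \<notin> fam_span n k b" by auto
    have x: "x \<in> carrier_vec n" using xV c by (auto simp: lin_closed_def)
    define r where "r = x - fam_proj n k b x"
    define b1 where "b1 = b(k := normalize_vec r)"
    have o1: "orthonormal n (Suc k) b1"
      using orthonormal_extend_residual[OF less.prems(1) x nx] unfolding r_def b1_def by auto
    have "fam_proj n k b x \<in> V" unfolding fam_proj_def using c less.prems(2) by (intro lin_closed_fam_lincomb) auto
    hence "r \<in> V" unfolding r_def using lin_closed_minus[OF c xV] by simp
    hence b1V: "\<forall>j<Suc k. b1 j \<in> V"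
      using less.prems(2) c unfolding b1_def normalize_vec_def by (auto simp: lin_closed_def less_Suc_eq)
    have "n - Suc k < n - k" using orthonormal_le_dim[OF o1] by simp
    then obtain k' b' where h: "Suc k \<le> k'" "orthonormal n k' b'" "\<forall>j<Suc k. b' j = b1 j" "\<forall>j<k'. b' j \<in> V"
      "fam_span n k' b' = V"
      using less.hyps[OF _ o1 b1V] by blast
    thus ?thesis unfolding b1_def by (intro exI[of _ k'] exI[of _ b']) auto
  qed
qed

lemma orthonormal_spanning_card:
  assumes o: "orthonormal n k b" and sp: "fam_span n k b = carrier_vec n"
  shows "k = n"
proof -
  have "real k = (\<Sum>i<n. 1)"
    unfolding orthonormal_card_eq_sum_coords[OF o]
  proof (intro sum.cong refl)
    fix i assume "i \<in> {..<n}"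
    hence "unit_vec n i \<in> fam_span n k b" using sp by simp
    thus "(\<Sum>j<k. (unit_vec n i \<bullet> b j)^2) = 1" using parseval[OF o] \<open>i \<in> {..<n}\<close> by fastforce
  qed
  thus ?thesis by simp
qed

lemma orthonormal_extend_full:
  assumes o: "orthonormal n j v"
  obtains w where "orthonormal n n w" "\<forall>k<j. w k = v k"
proof -
  obtain k' w where h: "orthonormal n k' w" "\<forall>k<j. w k = v k" "fam_span n k' w = carrier_vec n"
    using orthonormal_extend_basis[OF lin_closed_carrier o] o by (auto simp: orthonormal_def)
  thus ?thesis using that orthonormal_spanning_card[OF h(1,3)] by blast
qed

lemma orthonormal_full_span:
  assumes o: "orthonormal n n b" shows "fam_span n n b = carrier_vec n"
proof -
  obtain k' b' where h: "n \<le> k'" "orthonormal n k' b'" "\<forall>j<n. b' j = b j" "fam_span n k' b' = carrier_vec n"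
    using orthonormal_extend_basis[OF lin_closed_carrier o] o by (auto simp: orthonormal_def)
  have "k' = n" using orthonormal_le_dim[OF h(2)] h(1) by simp
  moreover have "fam_lincomb n n b' = fam_lincomb n n b" using h(3) by (intro ext fam_lincomb_cong) auto
  ultimately show ?thesis using h(4) unfolding fam_span_def by simp
qed

lemma orthonormal_full_expand: "orthonormal n n b \<Longrightarrow> x \<in> carrier_vec n \<Longrightarrow> fam_proj n n b x = x"
  using fam_proj_id orthonormal_full_span by blast

lemma orthonormal_in_span_card_le:
  assumes ov: "orthonormal n p v" and oF: "orthonormal n L F" and vin: "\<forall>i<p. v i \<in> fam_span n L F"
  shows "p \<le> L"
proof -
  have Fc: "\<And>l. l < L \<Longrightarrow> F l \<in> carrier_vec n" using oF by (simp add: orthonormal_def)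
  have "real p = (\<Sum>i<p. v i \<bullet> v i)" using ov by (simp add: orthonormal_def)
  also have "\<dots> = (\<Sum>i<p. \<Sum>l<L. (v i \<bullet> F l)^2)" using parseval[OF oF] vin by (intro sum.cong refl) auto
  also have "\<dots> = (\<Sum>l<L. \<Sum>i<p. (F l \<bullet> v i)^2)"
    by (subst sum.swap) (intro sum.cong refl, use Fc ov in \<open>auto simp: orthonormal_def comm_scalar_prod[of _ n]\<close>)
  also have "\<dots> \<le> (\<Sum>l<L. F l \<bullet> F l)" by (intro sum_mono bessel_inequality[OF ov]) (use Fc in auto)
  also have "\<dots> = L" using oF by (simp add: orthonormal_def)
  finally show ?thesis by simp
qed

text \<open>A combination of \<open>z\<^sub>1, z\<^sub>2, \<dots>\<close> in the span of \<open>b\<close> and \<open>r/|r|\<close> becomes, after removing the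
  multiple of \<open>z\<^sub>0\<close> contained in \<open>r\<close>, a combination of \<open>z\<^sub>0, z\<^sub>1, \<dots>\<close> in the span of \<open>b\<close>.\<close>

lemma independent_mod_extended_span:
  assumes o: "orthonormal n k b" and zc: "\<And>a. a < Suc p \<Longrightarrow> z a \<in> carrier_vec n"
    and H: "\<forall>c. fam_lincomb n (Suc p) z c \<in> fam_span n k b \<longrightarrow> (\<forall>a<Suc p. c a = 0)"
  defines "r \<equiv> z 0 - fam_proj n k b (z 0)"
  shows "\<forall>c. fam_lincomb n p (\<lambda>a. z (Suc a)) c \<in> fam_span n (Suc k) (b(k := normalize_vec r)) \<longrightarrow>
    (\<forall>a<p. c a = 0)"
proof -
  define z0 where "z0 = z 0"
  have z0c: "z0 \<in> carrier_vec n" unfolding z0_def using zc by simp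
  define s where "s = sqrt (r \<bullet> r)"
  define b' where "b' = b(k := normalize_vec r)"
  have rc: "r \<in> carrier_vec n" unfolding r_def using zc by simp
  define z' where "z' = (\<lambda>a. z (Suc a))"
  show ?thesis unfolding b'_def[symmetric] z'_def[symmetric]
  proof (rule allI, rule impI)
    fix c assume "fam_lincomb n p z' c \<in> fam_span n (Suc k) b'"
    then obtain e where e: "fam_lincomb n p z' c = fam_lincomb n (Suc k) b' e" unfolding fam_span_def by auto
    define c'' where "c'' = (\<lambda>a. if a = 0 then - (e k / s) else c (a - 1))"
    have "fam_lincomb n (Suc p) z c'' = fam_lincomb n k b (\<lambda>j. e j - (e k / s) * (z0 \<bullet> b j))"
    proof (rule eq_vecI)
      fix i assume "i < dim_vec (fam_lincomb n k b (\<lambda>j. e j - (e k / s) * (z0 \<bullet> b j)))"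
      hence i: "i < n" by simp
      have "fam_lincomb n (Suc p) z c'' = c'' 0 \<cdot>\<^sub>v z 0 + fam_lincomb n p z' (\<lambda>a. c'' (Suc a))"
        unfolding z'_def by (rule fam_lincomb_Suc_shift) (use zc in auto)
      also have "(\<lambda>a. c'' (Suc a)) = c" unfolding c''_def by auto
      finally have "fam_lincomb n (Suc p) z c'' $ i = - (e k / s) * z0 $ i + fam_lincomb n (Suc k) b' e $ i"
        using i e z0c unfolding c''_def z0_def by simp
      also have "fam_lincomb n (Suc k) b' e $ i = (\<Sum>j<k. e j * b j $ i) + e k * ((1 / s) * r $ i)"
        using i rc unfolding b'_def normalize_vec_def s_def by simp
      also have "r $ i = z0 $ i - (\<Sum>j<k. (z0 \<bullet> b j) * b j $ i)"
        unfolding r_def z0_def fam_proj_def using i z0c z0_def by simp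
      finally have A: "fam_lincomb n (Suc p) z c'' $ i = - (e k / s) * z0 $ i +
        ((\<Sum>j<k. e j * b j $ i) + e k * ((1 / s) * (z0 $ i - (\<Sum>j<k. (z0 \<bullet> b j) * b j $ i))))" .
      have B: "fam_lincomb n k b (\<lambda>j. e j - (e k / s) * (z0 \<bullet> b j)) $ i =
        (\<Sum>j<k. e j * b j $ i) - (e k / s) * (\<Sum>j<k. (z0 \<bullet> b j) * b j $ i)"
        using i by (simp add: left_diff_distrib sum_subtractf sum_distrib_left mult.assoc)
      show "fam_lincomb n (Suc p) z c'' $ i = fam_lincomb n k b (\<lambda>j. e j - (e k / s) * (z0 \<bullet> b j)) $ i"
        unfolding A B by (simp add: algebra_simps)
    qed simp
    hence "fam_lincomb n (Suc p) z c'' \<in> fam_span n k b" unfolding fam_span_def by simp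
    hence "\<forall>a<Suc p. c'' a = 0" using H by blast
    show "\<forall>a<p. c a = 0"
    proof (intro allI impI)
      fix a assume "a < p"
      hence "c'' (Suc a) = 0" using \<open>\<forall>a<Suc p. c'' a = 0\<close> by simp
      thus "c a = 0" unfolding c''_def by simp
    qed
  qed
qed

lemma independent_mod_span_card_le:
  assumes "orthonormal n k b" "\<forall>a<p. z a \<in> carrier_vec n"
    "\<forall>c. fam_lincomb n p z c \<in> fam_span n k b \<longrightarrow> (\<forall>a<p. c a = 0)"
  shows "k + p \<le> n"
  using assms
proof (induction p arbitrary: k b z)
  case 0 thus ?case using orthonormal_le_dim by simp
next
  case (Suc p)
  have zc: "\<And>a. a < Suc p \<Longrightarrow> z a \<in> carrier_vec n" using Suc.prems(2) by auto
  have "z 0 \<notin> fam_span n k b"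
  proof
    assume "z 0 \<in> fam_span n k b"
    moreover have "fam_lincomb n (Suc p) z (\<lambda>a. if a = 0 then 1 else 0) = z 0"
      by (rule fam_lincomb_unit) (use zc in auto)
    ultimately have "fam_lincomb n (Suc p) z (\<lambda>a. if a = 0 then 1 else 0) \<in> fam_span n k b" by simp
    hence "\<forall>a<Suc p. (if a = 0 then 1 else 0 :: real) = 0" using Suc.prems(3) by blast
    hence "(if (0::nat) = 0 then 1 else 0 :: real) = 0" by blast
    thus False by simp
  qed
  hence "orthonormal n (Suc k) (b(k := normalize_vec (z 0 - fam_proj n k b (z 0))))"
    using orthonormal_extend_residual(1)[OF Suc.prems(1)] zc by simp
  hence "Suc k + p \<le> n"
    by (rule Suc.IH[OF _ _ independent_mod_extended_span[OF Suc.prems(1) zc Suc.prems(3)]]) (use zc in auto)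
  thus ?case by simp
qed

section \<open>Subspaces, dimension and projections\<close>

lemma submodule_imp_lin_closed:
  assumes "submodule (class_ring :: real ring) N (module_vec TYPE(real) n)"
  shows "lin_closed n N"
  using assms unfolding submodule_def lin_closed_def
  by (auto simp: module_vec_simps class_ring_simps)

lemma lin_closed_imp_submodule:
  assumes "lin_closed n N"
  shows "submodule (class_ring :: real ring) N (module_vec TYPE(real) n)"
proof -
  interpret vec_space "TYPE(real)" n .
  show ?thesis using assms unfolding submodule_def lin_closed_def
    by (auto simp: module_vec_simps class_ring_simps intro: module_axioms)
qed

lemma rsubspace_iff_lin_closed: "rsubspace n V \<longleftrightarrow> lin_closed n V"
  unfolding rsubspace_def VectorSpace.subspace_def
  using submodule_imp_lin_closed lin_closed_imp_submodule vec_vs by auto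

lemma rspan_eq_fam_span:
  assumes o: "orthonormal n k b"
  shows "rspan n (b ` {..<k}) = fam_span n k b"
proof -
  interpret vec_space "TYPE(real)" n .
  have S: "b ` {..<k} \<subseteq> carrier_vec n" using o by (auto simp: orthonormal_def)
  have 1: "span (b ` {..<k}) \<subseteq> fam_span n k b"
  proof (rule span_is_subset)
    show "b ` {..<k} \<subseteq> fam_span n k b"
    proof
      fix x assume "x \<in> b ` {..<k}"
      then obtain i where i: "i < k" "x = b i" by auto
      thus "x \<in> fam_span n k b" using orthonormal_in_fam_span[OF o] by simp
    qed
    show "submodule class_ring (fam_span n k b) V" by (rule lin_closed_imp_submodule[OF lin_closed_fam_span])
  qed
  have 2: "fam_span n k b \<subseteq> span (b ` {..<k})"
  proof (rule fam_span_subset)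
    show "lin_closed n (span (b ` {..<k}))" by (rule submodule_imp_lin_closed, rule span_is_submodule[OF S])
    fix j assume "j < k" thus "b j \<in> span (b ` {..<k})" using in_own_span[OF S] by auto
  qed
  show ?thesis unfolding rspan_def using 1 2 by auto
qed

lemma orthonormal_lin_indpt:
  assumes o: "orthonormal n k b"
  shows "\<not> LinearCombinations.module.lin_dep (class_ring :: real ring) (module_vec TYPE(real) n) (b ` {..<k})"
proof -
  interpret vec_space "TYPE(real)" n .
  have S: "b ` {..<k} \<subseteq> carrier_vec n" using o by (auto simp: orthonormal_def)
  show ?thesis
  proof
    assume "lin_dep (b ` {..<k})"
    then obtain A a v where A: "finite A" "A \<subseteq> b ` {..<k}" "lincomb a A = 0\<^sub>v n" "v \<in> A" "a v \<noteq> 0"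
      unfolding lin_dep_def by auto
    obtain i where i: "i < k" "v = b i" using A by auto
    have Ac: "A \<subseteq> carrier_vec n" using A S by auto
    have lcc: "lincomb a A \<in> carrier_vec n" using A by simp
    have "lincomb a A \<bullet> b i = (\<Sum>l<n. (\<Sum>x\<in>A. a x * x $ l) * b i $ l)"
      using lcc o i by (subst scalar_prod_sum[of _ n]) (auto simp: orthonormal_def lincomb_index[OF _ Ac] intro!: sum.cong)
    also have "\<dots> = (\<Sum>x\<in>A. a x * (\<Sum>l<n. x $ l * b i $ l))"
      by (simp add: sum_distrib_left sum_distrib_right sum.swap[of _ "{..<n}"] mult.assoc)
    also have "\<dots> = (\<Sum>x\<in>A. a x * (x \<bullet> b i))"
      using Ac o i by (intro sum.cong refl) (auto simp: orthonormal_def scalar_prod_sum)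
    also have "\<dots> = (\<Sum>x\<in>A. if x = v then a x else 0)"
    proof (intro sum.cong refl)
      fix x assume "x \<in> A"
      then obtain j where j: "j < k" "x = b j" using A by auto
      have "x \<bullet> b i = (if x = v then 1 else 0)"
      proof (cases "j = i")
        case True thus ?thesis using o i j by (auto simp: orthonormal_def)
      next
        case False
        hence "x \<noteq> v" using orthonormal_inj[OF o] i j unfolding inj_on_def by auto
        thus ?thesis using o i j False by (auto simp: orthonormal_def)
      qed
      thus "a x * (x \<bullet> b i) = (if x = v then a x else 0)" by simp
    qed
    also have "\<dots> = a v" using A by simp
    finally show False using A o i by (simp add: orthonormal_def)
  qed
qed

lemma rdim_orthonormal_basis:
  assumes U: "rsubspace n U" and o: "orthonormal n k b" and sp: "fam_span n k b = U"
  shows "rdim n U = k"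
proof -
  interpret vec_space "TYPE(real)" n .
  have S: "b ` {..<k} \<subseteq> carrier_vec n" using o by (auto simp: orthonormal_def)
  have sub: "submodule class_ring U V" using U unfolding rsubspace_def VectorSpace.subspace_def by auto
  have SV: "b ` {..<k} \<subseteq> U" using orthonormal_in_fam_span[OF o] sp by auto
  interpret W: vectorspace class_ring "vs U" using subspace_is_vs U unfolding rsubspace_def by auto
  have "W.basis (b ` {..<k})"
    unfolding W.basis_def
    using span_li_not_depend[OF SV sub] orthonormal_lin_indpt[OF o] rspan_eq_fam_span[OF o] sp SV
    unfolding rspan_def by auto
  hence "W.dim = card (b ` {..<k})" by (intro W.dim_basis) auto
  also have "\<dots> = k" using orthonormal_inj[OF o] by (simp add: card_image)
  finally show ?thesis unfolding rdim_def .
qed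


lemma orthonormal_basis_extend:
  assumes U: "rsubspace n U" and o: "orthonormal n k b" and bU: "\<forall>j<k. b j \<in> U"
  shows "\<exists>b'. orthonormal n (rdim n U) b' \<and> (\<forall>j<k. b' j = b j) \<and> fam_span n (rdim n U) b' = U \<and>
    k \<le> rdim n U \<and> (\<forall>j<rdim n U. b' j \<in> U)"
proof -
  obtain k' b' where h: "k \<le> k'" "orthonormal n k' b'" "\<forall>j<k. b' j = b j" "\<forall>j<k'. b' j \<in> U" "fam_span n k' b' = U"
    using orthonormal_extend_basis[OF iffD1[OF rsubspace_iff_lin_closed U] o bU] by blast
  have "rdim n U = k'" using rdim_orthonormal_basis[OF U h(2) h(5)] .
  thus ?thesis using h by auto
qed

lemma orthonormal_basis_exists:
  assumes U: "rsubspace n U"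
  shows "\<exists>b. orthonormal n (rdim n U) b \<and> fam_span n (rdim n U) b = U \<and> (\<forall>j<rdim n U. b j \<in> U)"
  using orthonormal_basis_extend[OF U, of 0 undefined] by (auto simp: orthonormal_def)

lemma orth_proj_fam_span:
  assumes o: "orthonormal n k b" and x: "x \<in> carrier_vec n"
  shows "orth_proj n (fam_span n k b) x = fam_proj n k b x"
  unfolding orth_proj_def
proof (rule the_equality)
  show "fam_proj n k b x \<in> fam_span n k b \<and> (\<forall>w\<in>fam_span n k b. (x - fam_proj n k b x) \<bullet> w = 0)"
    using fam_proj_in_span fam_proj_residual_orth_span[OF o x] by auto
next
  fix y assume y: "y \<in> fam_span n k b \<and> (\<forall>w\<in>fam_span n k b. (x - y) \<bullet> w = 0)"
  have yc: "y \<in> carrier_vec n" using y unfolding fam_span_def by auto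
  have d: "y - fam_proj n k b x \<in> fam_span n k b"
    using lin_closed_minus[OF lin_closed_fam_span] y fam_proj_in_span by blast
  have "y - fam_proj n k b x = (x - fam_proj n k b x) - (x - y)" using x yc by (intro eq_vecI) auto
  hence "(y - fam_proj n k b x) \<bullet> (y - fam_proj n k b x) =
      (x - fam_proj n k b x) \<bullet> (y - fam_proj n k b x) - (x - y) \<bullet> (y - fam_proj n k b x)"
    using x yc by (simp add: minus_scalar_prod_distrib[of _ n])
  also have "\<dots> = 0" using fam_proj_residual_orth_span[OF o x d] y d by auto
  finally have "y - fam_proj n k b x = 0\<^sub>v n" using scalar_prod_self_eq_0D[of "y - fam_proj n k b x" n] yc by simp
  moreover have "y = (y - fam_proj n k b x) + fam_proj n k b x" using yc by (intro eq_vecI) auto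
  ultimately show "y = fam_proj n k b x" by simp
qed

definition proj_mat :: "nat \<Rightarrow> nat \<Rightarrow> (nat \<Rightarrow> real vec) \<Rightarrow> real mat" where
  "proj_mat n k b = mat n n (\<lambda>(i,l). \<Sum>j<k. b j $ i * b j $ l)"

lemma proj_fam_span:
  assumes o: "orthonormal n k b"
  shows "proj n (fam_span n k b) = proj_mat n k b"
  unfolding proj_def proj_mat_def
proof (rule eq_matI)
  fix i l assume i: "i < dim_row (mat n n (\<lambda>(i,l). \<Sum>j<k. b j $ i * b j $ l))"
    and l: "l < dim_col (mat n n (\<lambda>(i,l). \<Sum>j<k. b j $ i * b j $ l))"
  have i': "i < n" and l': "l < n" using i l by auto
  have "orth_proj n (fam_span n k b) (unit_vec n l) $ i = fam_proj n k b (unit_vec n l) $ i"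
    using orth_proj_fam_span[OF o] by simp
  also have "\<dots> = (\<Sum>j<k. (unit_vec n l \<bullet> b j) * b j $ i)" unfolding fam_proj_def using i' by simp
  also have "\<dots> = (\<Sum>j<k. b j $ i * b j $ l)"
    using o l' by (intro sum.cong refl) (auto simp: orthonormal_def)
  finally show "mat n n (\<lambda>(i, j). orth_proj n (fam_span n k b) (unit_vec n j) $ i) $$ (i, l) =
     mat n n (\<lambda>(i,l). \<Sum>j<k. b j $ i * b j $ l) $$ (i, l)" using i' l' by simp
qed auto

lemma proj_mat_carrier[simp]: "proj_mat n k b \<in> carrier_mat n n"
  unfolding proj_mat_def by simp

lemma proj_mat_dims[simp]: "dim_row (proj_mat n k b) = n" "dim_col (proj_mat n k b) = n"
  unfolding proj_mat_def by auto

lemma proj_mat_index: "i < n \<Longrightarrow> l < n \<Longrightarrow> proj_mat n k b $$ (i,l) = (\<Sum>j<k. b j $ i * b j $ l)"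
  unfolding proj_mat_def by simp

lemma proj_mat_mult_vec:
  assumes o: "orthonormal n k b" and x: "x \<in> carrier_vec n"
  shows "proj_mat n k b *\<^sub>v x = fam_proj n k b x"
proof (rule eq_vecI)
  fix i assume "i < dim_vec (fam_proj n k b x)"
  hence i: "i < n" by simp
  have "(proj_mat n k b *\<^sub>v x) $ i = (\<Sum>l<n. (\<Sum>j<k. b j $ i * b j $ l) * x $ l)"
    using i x unfolding mult_mat_vec_def proj_mat_def by (simp add: scalar_prod_sum[of _ n] row_def)
  also have "\<dots> = (\<Sum>l<n. \<Sum>j<k. b j $ i * b j $ l * x $ l)"
    by (simp add: sum_distrib_right)
  also have "\<dots> = (\<Sum>j<k. \<Sum>l<n. b j $ i * b j $ l * x $ l)" by (rule sum.swap)
  also have "\<dots> = (\<Sum>j<k. (\<Sum>l<n. x $ l * b j $ l) * b j $ i)"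
    by (intro sum.cong refl) (simp add: sum_distrib_left mult_ac)
  also have "\<dots> = (\<Sum>j<k. (x \<bullet> b j) * b j $ i)"
    using o x by (intro sum.cong refl) (auto simp: orthonormal_def scalar_prod_sum)
  also have "\<dots> = fam_proj n k b x $ i" unfolding fam_proj_def using i by simp
  finally show "(proj_mat n k b *\<^sub>v x) $ i = fam_proj n k b x $ i" .
qed (simp add: proj_mat_def)



section \<open>The spectral theorem for real symmetric matrices\<close>

definition symmetric_mat :: "nat \<Rightarrow> real mat \<Rightarrow> bool" where
  "symmetric_mat n A \<longleftrightarrow> A \<in> carrier_mat n n \<and> (\<forall>i<n. \<forall>l<n. A $$ (i,l) = A $$ (l,i))"

lemma symmetric_matD:
  "symmetric_mat n A \<Longrightarrow> A \<in> carrier_mat n n"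
  "symmetric_mat n A \<Longrightarrow> i < n \<Longrightarrow> l < n \<Longrightarrow> A $$ (i,l) = A $$ (l,i)"
  unfolding symmetric_mat_def by auto

lemma symmetric_mat_add: "symmetric_mat n A \<Longrightarrow> symmetric_mat n B \<Longrightarrow> symmetric_mat n (A + B)"
  unfolding symmetric_mat_def by auto

lemma symmetric_proj_mat: "symmetric_mat n (proj_mat n k b)"
  unfolding symmetric_mat_def by (simp add: proj_mat_index mult.commute)

lemma mult_mat_vec_index:
  "A \<in> carrier_mat nr nc \<Longrightarrow> y \<in> carrier_vec nc \<Longrightarrow> i < nr \<Longrightarrow> (A *\<^sub>v y) $ i = (\<Sum>l<nc. A $$ (i,l) * y $ l)"
  by (simp add: scalar_prod_def row_def lessThan_atLeast0)

lemma symmetric_mat_scalar_prod: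
  assumes A: "symmetric_mat n A" and x: "x \<in> carrier_vec n" and y: "y \<in> carrier_vec n"
  shows "x \<bullet> (A *\<^sub>v y) = (A *\<^sub>v x) \<bullet> y"
proof -
  have Ac: "A \<in> carrier_mat n n" using symmetric_matD(1)[OF A] .
  have "x \<bullet> (A *\<^sub>v y) = (\<Sum>i<n. \<Sum>l<n. x $ i * A $$ (i,l) * y $ l)"
    using Ac x y by (simp add: scalar_prod_sum[of _ n] mult_mat_vec_index[OF Ac y] sum_distrib_left mult.assoc)
  also have "\<dots> = (\<Sum>l<n. (\<Sum>i<n. A $$ (l,i) * x $ i) * y $ l)"
    by (subst sum.swap) (intro sum.cong refl, simp add: sum_distrib_right sum_distrib_left symmetric_matD(2)[OF A] mult_ac)
  also have "\<dots> = (A *\<^sub>v x) \<bullet> y" using Ac x y by (simp add: scalar_prod_sum[of _ n] mult_mat_vec_index[OF Ac x])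
  finally show ?thesis .
qed

lemma symmetric_mat_complex_eigenvalue_real:
  assumes B: "symmetric_mat r B" and v: "v \<in> carrier_vec r" "v \<noteq> 0\<^sub>v r"
    and E: "\<And>i. i < r \<Longrightarrow> (\<Sum>l<r. complex_of_real (B $$ (i,l)) * v $ l) = z * v $ i"
  shows "Im z = 0"
proof -
  define S where "S = (\<Sum>i<r. \<Sum>l<r. cnj (v $ i) * complex_of_real (B $$ (i,l)) * v $ l)"
  define N where "N = (\<Sum>i<r. (cmod (v $ i))^2)"
  have "S = (\<Sum>i<r. cnj (v $ i) * (\<Sum>l<r. complex_of_real (B $$ (i,l)) * v $ l))"
    unfolding S_def by (simp add: sum_distrib_left mult.assoc)
  also have "\<dots> = (\<Sum>i<r. cnj (v $ i) * (z * v $ i))" by (intro sum.cong refl) (simp add: E)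
  also have "\<dots> = z * complex_of_real N"
    unfolding N_def by (simp add: sum_distrib_left complex_norm_square mult_ac del: of_real_power)
  finally have SN: "S = z * complex_of_real N" .
  have "cnj S = (\<Sum>i<r. \<Sum>l<r. v $ i * complex_of_real (B $$ (i,l)) * cnj (v $ l))"
    unfolding S_def by simp
  also have "\<dots> = (\<Sum>l<r. \<Sum>i<r. v $ i * complex_of_real (B $$ (i,l)) * cnj (v $ l))"
    by (rule sum.swap)
  also have "\<dots> = S" unfolding S_def
    by (intro sum.cong refl) (simp add: symmetric_matD(2)[OF B] mult_ac)
  finally have cS: "cnj S = S" .
  obtain i0 where "i0 < r" "v $ i0 \<noteq> 0"
    using v by (metis carrier_vecD eq_vecI index_zero_vec(1) index_zero_vec(2))
  hence "N > 0" unfolding N_def by (intro sum_pos2[of _ i0]) auto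
  hence "z = S / complex_of_real N" using SN by simp
  hence "cnj z = z" using cS by simp
  thus ?thesis by (metis cnj.simps(2) neg_equal_zero)
qed

lemma symmetric_mat_has_eigenvector:
  assumes B: "symmetric_mat r B" and r: "0 < r"
  obtains \<mu> y where "y \<in> carrier_vec r" "y \<noteq> 0\<^sub>v r" "B *\<^sub>v y = \<mu> \<cdot>\<^sub>v y"
proof -
  have Bm: "B \<in> carrier_mat r r" using symmetric_matD(1)[OF B] .
  define Bc where "Bc = map_mat complex_of_real B"
  have Bc: "Bc \<in> carrier_mat r r" using Bm unfolding Bc_def by simp
  have "degree (char_poly Bc) = r" using degree_monic_char_poly[OF Bc] by simp
  hence "\<not> constant (poly (char_poly Bc))" using r by (simp add: constant_degree)
  then obtain z where "poly (char_poly Bc) z = 0" using fundamental_theorem_of_algebra by blast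
  hence "eigenvalue Bc z" using eigenvalue_root_char_poly[OF Bc] by simp
  then obtain v where v: "v \<in> carrier_vec r" "v \<noteq> 0\<^sub>v r" "Bc *\<^sub>v v = z \<cdot>\<^sub>v v"
    unfolding eigenvalue_def eigenvector_def using Bc by auto
  have E: "(\<Sum>l<r. complex_of_real (B $$ (i,l)) * v $ l) = z * v $ i" if i: "i < r" for i
  proof -
    have "(Bc *\<^sub>v v) $ i = (\<Sum>l<r. Bc $$ (i,l) * v $ l)" by (rule mult_mat_vec_index[OF Bc v(1) i])
    also have "\<dots> = (\<Sum>l<r. complex_of_real (B $$ (i,l)) * v $ l)"
      using Bm i unfolding Bc_def by (intro sum.cong refl) auto
    finally have "(\<Sum>l<r. complex_of_real (B $$ (i,l)) * v $ l) = (Bc *\<^sub>v v) $ i" ..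
    thus ?thesis using i v by simp
  qed
  define \<mu> where "\<mu> = Re z"
  have z: "z = complex_of_real \<mu>"
    using symmetric_mat_complex_eigenvalue_real[OF B v(1,2) E] unfolding \<mu>_def by (simp add: complex_eq_iff)
  have part_eigen: "B *\<^sub>v vec r (\<lambda>i. f (v $ i)) = \<mu> \<cdot>\<^sub>v vec r (\<lambda>i. f (v $ i))"
    if f: "\<And>a b. f (a + b) = f a + f b" "\<And>x a. f (complex_of_real x * a) = x * f a"
      "\<And>F (L :: nat set). f (sum F L) = (\<Sum>l\<in>L. f (F l))" for f :: "complex \<Rightarrow> real"
  proof (rule eq_vecI)
    fix i assume "i < dim_vec (\<mu> \<cdot>\<^sub>v vec r (\<lambda>i. f (v $ i)))" hence i: "i < r" by simp
    have "(B *\<^sub>v vec r (\<lambda>i. f (v $ i))) $ i = (\<Sum>l<r. B $$ (i,l) * f (v $ l))"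
      using mult_mat_vec_index[OF Bm _ i, of "vec r (\<lambda>i. f (v $ i))"] by simp
    also have "\<dots> = f (\<Sum>l<r. complex_of_real (B $$ (i,l)) * v $ l)" by (simp add: f(2,3))
    also have "\<dots> = \<mu> * f (v $ i)" using E[OF i] z f(2) by simp
    finally show "(B *\<^sub>v vec r (\<lambda>i. f (v $ i))) $ i = (\<mu> \<cdot>\<^sub>v vec r (\<lambda>i. f (v $ i))) $ i" using i by simp
  qed (use Bm in simp)
  obtain i0 where i0: "i0 < r" "v $ i0 \<noteq> 0"
    using v by (metis carrier_vecD eq_vecI index_zero_vec(1) index_zero_vec(2))
  show ?thesis
  proof (cases "Re (v $ i0) = 0")
    case True
    hence "Im (v $ i0) \<noteq> 0" using i0 by (simp add: complex_eq_iff)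
    hence "vec r (\<lambda>i. Im (v $ i)) \<noteq> 0\<^sub>v r" using i0 by (metis index_vec index_zero_vec(1))
    thus ?thesis using that[of "vec r (\<lambda>i. Im (v $ i))" \<mu>] part_eigen[of Im] by (simp add: Im_sum)
  next
    case False
    hence "vec r (\<lambda>i. Re (v $ i)) \<noteq> 0\<^sub>v r" using i0 by (metis index_vec index_zero_vec(1))
    thus ?thesis using that[of "vec r (\<lambda>i. Re (v $ i))" \<mu>] part_eigen[of Re] by (simp add: Re_sum)
  qed
qed

lemma sum_shift_lower:
  fixes f :: "nat \<Rightarrow> real"
  assumes "j \<le> n"
  shows "(\<Sum>k<n. if k < j then 0 else f (k - j)) = (\<Sum>c<n - j. f c)"
proof -
  obtain d where n: "n = j + d" using assms le_Suc_ex by blast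
  have "(\<Sum>k<j + d. if k < j then 0 else f (k - j)) = (\<Sum>c<d. f c)"
    by (induction d) auto
  thus ?thesis using n by simp
qed

definition compress_mat :: "nat \<Rightarrow> nat \<Rightarrow> (nat \<Rightarrow> real vec) \<Rightarrow> real mat \<Rightarrow> real mat" where
  "compress_mat n j w A = mat (n - j) (n - j) (\<lambda>(a, c). w (j + a) \<bullet> (A *\<^sub>v w (j + c)))"

lemma symmetric_compress_mat:
  assumes A: "symmetric_mat n A" and ow: "orthonormal n n w"
  shows "symmetric_mat (n - j) (compress_mat n j w A)"
  unfolding symmetric_mat_def compress_mat_def
proof (intro conjI allI impI)
  fix a c assume "a < n - j" "c < n - j"
  hence wc: "w (j + a) \<in> carrier_vec n" "w (j + c) \<in> carrier_vec n" using ow by (auto simp: orthonormal_def)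
  have "w (j + a) \<bullet> (A *\<^sub>v w (j + c)) = w (j + c) \<bullet> (A *\<^sub>v w (j + a))"
    using symmetric_mat_scalar_prod[OF A wc] symmetric_matD(1)[OF A] wc by (simp add: comm_scalar_prod[of _ n])
  thus "mat (n - j) (n - j) (\<lambda>(a, c). w (j + a) \<bullet> (A *\<^sub>v w (j + c))) $$ (a, c) =
    mat (n - j) (n - j) (\<lambda>(a, c). w (j + a) \<bullet> (A *\<^sub>v w (j + c))) $$ (c, a)"
    using \<open>a < n - j\<close> \<open>c < n - j\<close> by simp
qed simp

text \<open>If the first \<open>j\<close> vectors of the basis \<open>w\<close> are eigenvectors, the span of the others is
  \<open>A\<close>-invariant, so eigenvectors of the compression are eigenvectors of \<open>A\<close>.\<close>

lemma compress_mat_eigenvector: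
  assumes A: "symmetric_mat n A" and ow: "orthonormal n n w" and j: "j \<le> n"
    and ev: "\<forall>k<j. A *\<^sub>v w k = lam k \<cdot>\<^sub>v w k"
    and y: "y \<in> carrier_vec (n - j)" "compress_mat n j w A *\<^sub>v y = \<mu> \<cdot>\<^sub>v y"
  defines "z \<equiv> fam_lincomb n n w (\<lambda>k. if k < j then 0 else y $ (k - j))"
  shows "A *\<^sub>v z = \<mu> \<cdot>\<^sub>v z"
proof -
  define coef where "coef = (\<lambda>k. if k < j then 0 else y $ (k - j))"
  have Am: "A \<in> carrier_mat n n" using symmetric_matD(1)[OF A] .
  have wc: "\<And>k. k < n \<Longrightarrow> w k \<in> carrier_vec n" using ow by (simp add: orthonormal_def)
  have zc: "z \<in> carrier_vec n" unfolding z_def by simp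
  have wz: "\<And>k. k < n \<Longrightarrow> w k \<bullet> z = coef k" unfolding z_def coef_def using orthonormal_coeff[OF ow] by simp
  have coord: "(A *\<^sub>v z) \<bullet> w k = \<mu> * coef k" if k: "k < n" for k
  proof -
    have Az: "(A *\<^sub>v z) \<bullet> w k = z \<bullet> (A *\<^sub>v w k)" using symmetric_mat_scalar_prod[OF A zc wc[OF k]] by simp
    show ?thesis
    proof (cases "k < j")
      case True
      have "z \<bullet> (A *\<^sub>v w k) = lam k * (w k \<bullet> z)" using ev True zc wc[OF k] by (simp add: comm_scalar_prod[of _ n])
      thus ?thesis using Az wz[OF k] True unfolding coef_def by simp
    next
      case False
      define a where "a = k - j"
      have a: "a < n - j" "k = j + a" using False k unfolding a_def by auto
      have "z \<bullet> (A *\<^sub>v w k) = (\<Sum>k'<n. coef k' * (w k' \<bullet> (A *\<^sub>v w k)))"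
        unfolding z_def coef_def using Am wc[OF k] by (intro fam_lincomb_scalar_prod) (auto intro: wc)
      also have "\<dots> = (\<Sum>k'<n. if k' < j then 0 else y $ (k' - j) * (w (j + (k' - j)) \<bullet> (A *\<^sub>v w k)))"
        unfolding coef_def by (intro sum.cong refl) auto
      also have "\<dots> = (\<Sum>c<n - j. y $ c * (w (j + c) \<bullet> (A *\<^sub>v w k)))"
        using j by (rule sum_shift_lower)
      also have "\<dots> = (\<Sum>c<n - j. compress_mat n j w A $$ (a,c) * y $ c)"
        using a symmetric_matD(2)[OF symmetric_compress_mat[OF A ow, of j]]
        by (intro sum.cong refl) (auto simp: compress_mat_def)
      also have "\<dots> = \<mu> * coef k"
        using y a mult_mat_vec_index[of "compress_mat n j w A" "n - j" "n - j" y a]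
        unfolding coef_def by (simp add: compress_mat_def)
      finally show ?thesis using Az by simp
    qed
  qed
  have "A *\<^sub>v z = fam_lincomb n n w (\<lambda>k. (A *\<^sub>v z) \<bullet> w k)"
    using orthonormal_full_expand[OF ow, of "A *\<^sub>v z"] Am zc unfolding fam_proj_def by simp
  also have "\<dots> = fam_lincomb n n w (\<lambda>k. \<mu> * coef k)" by (rule fam_lincomb_cong) (auto simp: coord)
  also have "\<dots> = \<mu> \<cdot>\<^sub>v z" unfolding z_def coef_def fam_lincomb_smult ..
  finally show ?thesis .
qed

lemma symmetric_mat_eigenvector_orth:
  assumes A: "symmetric_mat n A" and o: "orthonormal n j v" and ev: "\<forall>k<j. A *\<^sub>v v k = lam k \<cdot>\<^sub>v v k"
    and j: "j < n"
  obtains u \<mu> where "u \<in> carrier_vec n" "u \<bullet> u = 1" "\<forall>k<j. v k \<bullet> u = 0" "A *\<^sub>v u = \<mu> \<cdot>\<^sub>v u"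
proof -
  obtain w where ow: "orthonormal n n w" and wv: "\<forall>k<j. w k = v k" using orthonormal_extend_full[OF o] by blast
  have wc: "\<And>k. k < n \<Longrightarrow> w k \<in> carrier_vec n" using ow by (simp add: orthonormal_def)
  have "0 < n - j" using j by simp
  then obtain \<mu> y where y: "y \<in> carrier_vec (n - j)" "y \<noteq> 0\<^sub>v (n - j)" "compress_mat n j w A *\<^sub>v y = \<mu> \<cdot>\<^sub>v y"
    by (rule symmetric_mat_has_eigenvector[OF symmetric_compress_mat[OF A ow]])
  define z where "z = fam_lincomb n n w (\<lambda>k. if k < j then 0 else y $ (k - j))"
  have zc: "z \<in> carrier_vec n" unfolding z_def by simp
  have Az: "A *\<^sub>v z = \<mu> \<cdot>\<^sub>v z"
    unfolding z_def using compress_mat_eigenvector[OF A ow _ _ y(1,3), of lam] j ev wv by simp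
  have wz: "\<And>k. k < n \<Longrightarrow> w k \<bullet> z = (if k < j then 0 else y $ (k - j))"
    unfolding z_def using orthonormal_coeff[OF ow] by simp
  have z0: "z \<noteq> 0\<^sub>v n"
  proof
    assume "z = 0\<^sub>v n"
    hence "y $ a = 0" if "a < n - j" for a using wz[of "j + a"] wc[of "j + a"] that by simp
    hence "y = 0\<^sub>v (n - j)" using y(1) by (intro eq_vecI) auto
    thus False using y(2) by simp
  qed
  show ?thesis
  proof (rule that)
    show "normalize_vec z \<in> carrier_vec n" "normalize_vec z \<bullet> normalize_vec z = 1"
      using zc z0 normalize_vec_unit by auto
    show "\<forall>k<j. v k \<bullet> normalize_vec z = 0"
    proof (intro allI impI)
      fix k assume "k < j"
      thus "v k \<bullet> normalize_vec z = 0" using wv wz[of k] wc[of k] zc j by (simp add: scalar_prod_normalize_vec)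
    qed
    show "A *\<^sub>v normalize_vec z = \<mu> \<cdot>\<^sub>v normalize_vec z"
      unfolding normalize_vec_def using Az mult_mat_vec[OF symmetric_matD(1)[OF A] zc]
      by (simp add: smult_smult_assoc mult.commute)
  qed
qed

lemma symmetric_mat_orthonormal_eigenbasis:
  assumes A: "symmetric_mat n A"
  obtains v lam where "orthonormal n n v" "\<forall>k<n. A *\<^sub>v v k = lam k \<cdot>\<^sub>v v k"
proof -
  have "j \<le> n \<Longrightarrow> \<exists>v lam. orthonormal n j v \<and> (\<forall>k<j. A *\<^sub>v v k = lam k \<cdot>\<^sub>v v k)" for j
  proof (induction j)
    case 0 thus ?case by (auto simp: orthonormal_def)
  next
    case (Suc j)
    then obtain v lam where o: "orthonormal n j v" and ev: "\<forall>k<j. A *\<^sub>v v k = lam k \<cdot>\<^sub>v v k" by auto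
    obtain u \<mu> where u: "u \<in> carrier_vec n" "u \<bullet> u = 1" "\<forall>k<j. v k \<bullet> u = 0" "A *\<^sub>v u = \<mu> \<cdot>\<^sub>v u"
      using symmetric_mat_eigenvector_orth[OF A o ev] Suc.prems by auto
    have "orthonormal n (Suc j) (v(j := u))" using orthonormal_insert[OF o u(1,3,2)] .
    moreover have "\<forall>k<Suc j. A *\<^sub>v (v(j := u)) k = (lam(j := \<mu>)) k \<cdot>\<^sub>v (v(j := u)) k"
      using ev u(4) by (auto simp: less_Suc_eq)
    ultimately show ?case by blast
  qed
  thus ?thesis using that by blast
qed

lemma char_poly_orthonormal_eigenbasis:
  assumes A: "A \<in> carrier_mat n n" and o: "orthonormal n n v" and ev: "\<forall>k<n. A *\<^sub>v v k = lam k \<cdot>\<^sub>v v k"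
  shows "char_poly A = (\<Prod>x\<leftarrow>map lam [0..<n]. [:- x, 1:])"
proof -
  define Vm where "Vm = mat n n (\<lambda>(i,k). v k $ i)"
  define Vt where "Vt = mat n n (\<lambda>(k,i). v k $ i)"
  define D where "D = mat n n (\<lambda>(i,k). if i = k then lam i else 0)"
  have c: "Vm \<in> carrier_mat n n" "Vt \<in> carrier_mat n n" "D \<in> carrier_mat n n"
    unfolding Vm_def Vt_def D_def by auto
  have vc: "\<And>k. k < n \<Longrightarrow> v k \<in> carrier_vec n" using o by (simp add: orthonormal_def)
  have row_Vt: "row Vt k = v k" and col_Vm: "col Vm k = v k" if "k < n" for k
    using vc[OF that] that unfolding Vt_def Vm_def by (auto intro!: eq_vecI)
  have VtVm: "Vt * Vm = 1\<^sub>m n"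
    using c o by (intro eq_matI) (auto simp: row_Vt col_Vm orthonormal_def)
  have "Vt * A * Vm = Vt * (A * Vm)" using A c by simp
  also have "\<dots> = D"
  proof (rule eq_matI)
    fix k l assume "k < dim_row D" "l < dim_col D"
    hence kl: "k < n" "l < n" unfolding D_def by auto
    have "(Vt * (A * Vm)) $$ (k,l) = row Vt k \<bullet> col (A * Vm) l" using kl A c by simp
    also have "col (A * Vm) l = A *\<^sub>v col Vm l" using kl A c by (intro col_mult2) auto
    also have "row Vt k \<bullet> (A *\<^sub>v col Vm l) = v k \<bullet> (A *\<^sub>v v l)" using kl by (simp only: row_Vt col_Vm)
    also have "\<dots> = lam l * (v k \<bullet> v l)" using ev kl vc[OF kl(1)] vc[OF kl(2)] by simp
    also have "\<dots> = D $$ (k,l)" using kl o unfolding D_def orthonormal_def by auto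
    finally show "(Vt * (A * Vm)) $$ (k,l) = D $$ (k,l)" .
  qed (use A c in auto)
  finally have VAV: "Vt * A * Vm = D" .
  have "similar_mat D A"
    unfolding similar_mat_def similar_mat_wit_def
    using A c VtVm VAV mat_mult_left_right_inverse[OF c(2,1) VtVm]
    by (intro exI[of _ Vt] exI[of _ Vm]) (auto simp: Let_def D_def)
  hence "char_poly A = char_poly D" by (simp add: char_poly_similar)
  also have "\<dots> = (\<Prod>a\<leftarrow>diag_mat D. [:- a, 1:])"
    by (rule char_poly_upper_triangular[OF c(3)]) (auto simp: upper_triangular_def D_def)
  also have "diag_mat D = map lam [0..<n]" unfolding diag_mat_def D_def by (intro map_cong) auto
  finally show ?thesis .
qed

lemma prod_mset_linear_factors_inj:
  fixes A B :: "real multiset"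
  shows "prod_mset (image_mset (\<lambda>x. [:- x, 1:]) A) = prod_mset (image_mset (\<lambda>x. [:- x, 1:]) B) \<Longrightarrow> A = B"
proof (induction A arbitrary: B)
  case empty
  show ?case
  proof (rule ccontr)
    assume "{#} \<noteq> B"
    then obtain y where y: "y \<in># B" by (metis multiset_nonemptyE)
    have "poly (prod_mset (image_mset (\<lambda>x. [:- x, 1:]) B)) y = 0"
      using y by (auto simp: poly_prod_mset prod_mset_zero_iff)
    thus False using empty by simp
  qed
next
  case (add x A)
  have "poly (prod_mset (image_mset (\<lambda>x. [:- x, 1:]) (add_mset x A))) x = 0"
    by (simp add: poly_prod_mset)
  moreover have "poly (prod_mset (image_mset (\<lambda>x. [:- x, 1:]) B)) x = poly (prod_mset (image_mset (\<lambda>x. [:- x, 1:]) (add_mset x A))) x"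
    by (rule arg_cong[where f="\<lambda>p. poly p x", OF add.prems[symmetric]])
  ultimately have "poly (prod_mset (image_mset (\<lambda>x. [:- x, 1:]) B)) x = 0" by simp
  hence xB: "x \<in># B" by (auto simp: poly_prod_mset prod_mset_zero_iff)
  define B' where "B' = B - {#x#}"
  have BB: "B = add_mset x B'" unfolding B'_def using xB by simp
  have "[:- x, 1:] * prod_mset (image_mset (\<lambda>x. [:- x, 1:]) A) = [:- x, 1:] * prod_mset (image_mset (\<lambda>x. [:- x, 1:]) B')"
    using add.prems unfolding BB by simp
  hence "prod_mset (image_mset (\<lambda>x. [:- x, 1:]) A) = prod_mset (image_mset (\<lambda>x. [:- x, 1:]) B')"
    by (subst (asm) mult_left_cancel) auto
  hence "A = B'" by (rule add.IH)
  thus ?case using BB by simp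
qed

lemma prod_list_mset: "(\<Prod>x\<leftarrow>xs. f x) = prod_mset (image_mset f (mset xs))"
  by (simp add: prod_mset_prod_list[symmetric])

lemma eigs_desc_eq_rev_sort:
  assumes cp: "char_poly A = (\<Prod>x\<leftarrow>ys. [:- x, 1:])"
  shows "eigs_desc A = rev (sort ys)"
proof -
  define P where "P = (\<lambda>xs. sorted_wrt (\<ge>) xs \<and> char_poly A = (\<Prod>x\<leftarrow>xs. [:- x, 1:]))"
  have "P (rev (sort ys))" unfolding P_def cp
    by (auto simp: sorted_wrt_rev prod_list_mset sorted_sort)
  hence "P (eigs_desc A)" unfolding eigs_desc_def P_def[symmetric] by (rule someI)
  hence s: "sorted_wrt (\<ge>) (eigs_desc A)" and c: "(\<Prod>x\<leftarrow>eigs_desc A. [:- x, 1:]) = (\<Prod>x\<leftarrow>ys. [:- x, 1:])"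
    unfolding P_def cp by auto
  have m: "mset (eigs_desc A) = mset ys" using c unfolding prod_list_mset by (rule prod_mset_linear_factors_inj)
  have "sort ys = rev (eigs_desc A)"
    by (rule properties_for_sort) (use m s in \<open>auto simp: sorted_wrt_rev\<close>)
  thus ?thesis by simp
qed

theorem spectral_theorem:
  assumes A: "symmetric_mat n A"
  obtains v where "orthonormal n n v" "\<forall>k<n. A *\<^sub>v v k = eigs_desc A ! k \<cdot>\<^sub>v v k"
    "length (eigs_desc A) = n" "sorted_wrt (\<ge>) (eigs_desc A)"
proof -
  obtain v lam where o: "orthonormal n n v" and ev: "\<forall>k<n. A *\<^sub>v v k = lam k \<cdot>\<^sub>v v k"
    using symmetric_mat_orthonormal_eigenbasis[OF A] by blast
  define ys where "ys = map lam [0..<n]"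
  have e: "eigs_desc A = rev (sort ys)"
    by (rule eigs_desc_eq_rev_sort)
      (use char_poly_orthonormal_eigenbasis[OF symmetric_matD(1)[OF A] o ev] in \<open>simp add: ys_def\<close>)
  have m: "mset (eigs_desc A) = mset ys" unfolding e by simp
  obtain p where p: "p permutes {..<length ys}" "permute_list p ys = eigs_desc A"
    using mset_eq_permutation[OF m] by blast
  have len: "length (eigs_desc A) = n" using m ys_def by (metis length_map length_upt minus_nat.diff_0 size_mset)
  have pp: "p permutes {..<n}" using p(1) unfolding ys_def by simp
  have pn: "\<And>k. k < n \<Longrightarrow> p k < n" by (metis lessThan_iff permutes_in_image[OF pp])
  have pinj: "\<And>k l. k < n \<Longrightarrow> l < n \<Longrightarrow> p k = p l \<Longrightarrow> k = l"
    using p(1) unfolding ys_def by (metis permutes_inj injD)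
  have ek: "\<And>k. k < n \<Longrightarrow> eigs_desc A ! k = lam (p k)"
    using p(2)[symmetric] pn unfolding ys_def by (simp add: permute_list_def)
  have o': "orthonormal n n (v \<circ> p)"
    using o pn pinj unfolding orthonormal_def by auto
  have ev': "\<forall>k<n. A *\<^sub>v (v \<circ> p) k = eigs_desc A ! k \<cdot>\<^sub>v (v \<circ> p) k"
    using ev pn ek by simp
  have "sorted_wrt (\<ge>) (eigs_desc A)" unfolding e by (simp add: sorted_wrt_rev sorted_sort)
  thus ?thesis using that o' ev' len by blast
qed



lemma quad_form_eigen_expansion:
  assumes A: "symmetric_mat n A" and o: "orthonormal n n v"
    and ev: "\<forall>k<n. A *\<^sub>v v k = e k \<cdot>\<^sub>v v k" and x: "x \<in> carrier_vec n"
  shows "x \<bullet> (A *\<^sub>v x) = (\<Sum>k<n. e k * (x \<bullet> v k)^2)"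
proof -
  have vc: "\<And>k. k < n \<Longrightarrow> v k \<in> carrier_vec n" using o by (simp add: orthonormal_def)
  have Ax: "A *\<^sub>v x \<in> fam_span n n v" using orthonormal_full_span[OF o] symmetric_matD(1)[OF A] x by simp
  have "x \<bullet> (A *\<^sub>v x) = (\<Sum>k<n. (x \<bullet> v k) * ((A *\<^sub>v x) \<bullet> v k))" by (rule parseval_scalar_prod[OF o x Ax])
  also have "\<dots> = (\<Sum>k<n. e k * (x \<bullet> v k)^2)"
  proof (intro sum.cong refl)
    fix k assume "k \<in> {..<n}" hence k: "k < n" by simp
    have "(A *\<^sub>v x) \<bullet> v k = x \<bullet> (A *\<^sub>v v k)" using symmetric_mat_scalar_prod[OF A x vc[OF k]] by simp
    also have "\<dots> = e k * (x \<bullet> v k)" using ev k x vc[OF k] by simp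
    finally show "(x \<bullet> v k) * ((A *\<^sub>v x) \<bullet> v k) = e k * (x \<bullet> v k)^2" by (simp add: power2_eq_square)
  qed
  finally show ?thesis .
qed

lemma eigenvalue_in_eigenbasis:
  assumes A: "symmetric_mat n A" and o: "orthonormal n n v"
    and ev: "\<forall>k<n. A *\<^sub>v v k = e k \<cdot>\<^sub>v v k"
    and y: "y \<in> carrier_vec n" "y \<noteq> 0\<^sub>v n" "A *\<^sub>v y = \<mu> \<cdot>\<^sub>v y"
  shows "\<exists>l<n. e l = \<mu>"
proof -
  have vc: "\<And>k. k < n \<Longrightarrow> v k \<in> carrier_vec n" using o by (simp add: orthonormal_def)
  obtain l where l: "l < n" "y \<bullet> v l \<noteq> 0"
  proof (rule ccontr)
    assume "\<not> thesis"
    hence "\<forall>l<n. y \<bullet> v l = 0" using that by blast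
    hence "y \<bullet> y = 0" using parseval[OF o] orthonormal_full_span[OF o] y(1) by simp
    thus False using scalar_prod_self_pos[OF y(1,2)] by simp
  qed
  have "\<mu> * (y \<bullet> v l) = (A *\<^sub>v y) \<bullet> v l" using y vc[OF l(1)] by simp
  also have "\<dots> = y \<bullet> (A *\<^sub>v v l)" using symmetric_mat_scalar_prod[OF A y(1) vc[OF l(1)]] by simp
  also have "\<dots> = e l * (y \<bullet> v l)" using ev l(1) y(1) vc[OF l(1)] by simp
  finally show ?thesis using l by auto
qed

lemma sorted_weighted_sum_le:
  fixes es :: "real list" and c :: "nat \<Rightarrow> real"
  assumes srt: "sorted_wrt (\<ge>) es" and len: "length es = n" and mn: "m \<le> n"
    and c: "\<And>k. k < n \<Longrightarrow> 0 \<le> c k \<and> c k \<le> 1" and csum: "(\<Sum>k<n. c k) = m"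
  shows "(\<Sum>k<n. es ! k * c k) \<le> (\<Sum>k<m. es ! k)"
proof (cases m)
  case 0
  hence "\<forall>k\<in>{..<n}. c k = 0" using c csum by (subst sum_nonneg_eq_0_iff[symmetric]) auto
  thus ?thesis using 0 by simp
next
  case (Suc m')
  define L where "L = es ! m'"
  have ge: "es ! k \<ge> L" if "k < m" for k
    using sorted_wrt_nth_less[OF srt, of k m'] that len mn Suc unfolding L_def by (cases "k = m'") auto
  have le: "es ! k \<le> L" if "m \<le> k" "k < n" for k
    using sorted_wrt_nth_less[OF srt, of m' k] that len Suc unfolding L_def by auto
  have "(\<Sum>k<n. es ! k * c k) \<le> (\<Sum>k<n. L * c k + (if k < m then es ! k - L else 0))"
  proof (intro sum_mono)
    fix k assume "k \<in> {..<n}" hence k: "k < n" by simp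
    show "es ! k * c k \<le> L * c k + (if k < m then es ! k - L else 0)"
    proof (cases "k < m")
      case True
      have "(es ! k - L) * (c k - 1) \<le> 0" using ge[OF True] c[OF k] by (intro mult_nonneg_nonpos) auto
      thus ?thesis using True by (simp add: algebra_simps)
    next
      case False
      have "(L - es ! k) * c k \<ge> 0" using le[of k] False k c[OF k] by simp
      thus ?thesis using False by (simp add: algebra_simps)
    qed
  qed
  also have "\<dots> = L * m + (\<Sum>k<m. es ! k - L)"
  proof -
    have "{..<n} \<inter> {k. k < m} = {..<m}" using mn by auto
    thus ?thesis using csum by (simp add: sum.distrib sum_distrib_left[symmetric] sum.If_cases)
  qed
  also have "\<dots> = (\<Sum>k<m. es ! k)" by (simp add: sum_subtractf)
  finally show ?thesis .
qed

theorem ky_fan_inequality: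
  assumes A: "symmetric_mat n A" and ow: "orthonormal n m w"
  shows "(\<Sum>j<m. w j \<bullet> (A *\<^sub>v w j)) \<le> (\<Sum>k<m. eigs_desc A ! k)"
proof -
  obtain v where o: "orthonormal n n v" and ev: "\<forall>k<n. A *\<^sub>v v k = eigs_desc A ! k \<cdot>\<^sub>v v k"
    and len: "length (eigs_desc A) = n" and srt: "sorted_wrt (\<ge>) (eigs_desc A)"
    using spectral_theorem[OF A] by blast
  have vc: "\<And>k. k < n \<Longrightarrow> v k \<in> carrier_vec n" using o by (simp add: orthonormal_def)
  have wc: "\<And>j. j < m \<Longrightarrow> w j \<in> carrier_vec n" using ow by (simp add: orthonormal_def)
  define c where "c = (\<lambda>k. \<Sum>j<m. (w j \<bullet> v k)^2)"
  have c01: "0 \<le> c k \<and> c k \<le> 1" if k: "k < n" for k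
  proof -
    have "c k = (\<Sum>j<m. (v k \<bullet> w j)^2)" unfolding c_def
      using vc[OF k] wc by (intro sum.cong refl) (simp add: comm_scalar_prod[of _ n])
    also have "\<dots> \<le> v k \<bullet> v k" by (rule bessel_inequality[OF ow vc[OF k]])
    finally show ?thesis using o k unfolding c_def by (auto simp: orthonormal_def intro: sum_nonneg)
  qed
  have "(\<Sum>k<n. c k) = (\<Sum>j<m. \<Sum>k<n. (w j \<bullet> v k)^2)" unfolding c_def by (rule sum.swap)
  also have "\<dots> = (\<Sum>j<m. w j \<bullet> w j)"
    using parseval[OF o] orthonormal_full_span[OF o] wc by (intro sum.cong refl) auto
  also have "\<dots> = m" using ow by (simp add: orthonormal_def)
  finally have csum: "(\<Sum>k<n. c k) = m" .
  have "(\<Sum>j<m. w j \<bullet> (A *\<^sub>v w j)) = (\<Sum>j<m. \<Sum>k<n. eigs_desc A ! k * (w j \<bullet> v k)^2)"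
    using quad_form_eigen_expansion[OF A o ev] wc by (intro sum.cong refl) auto
  also have "\<dots> = (\<Sum>k<n. eigs_desc A ! k * c k)" unfolding c_def
    by (subst sum.swap) (simp add: sum_distrib_left)
  also have "\<dots> \<le> (\<Sum>k<m. eigs_desc A ! k)"
    by (rule sorted_weighted_sum_le[OF srt len orthonormal_le_dim[OF ow] c01 csum])
  finally show ?thesis .
qed

section \<open>The Frobenius inner product\<close>

definition frob_inner :: "real mat \<Rightarrow> real mat \<Rightarrow> real" where
  "frob_inner A B = (\<Sum>i<dim_row A. \<Sum>j<dim_col A. A $$ (i,j) * B $$ (i,j))"

lemma frob_norm_nonneg: "frob_norm A \<ge> 0"
  unfolding frob_norm_def by (simp add: sum_nonneg)

lemma frob_norm_sq: "(frob_norm A)^2 = frob_inner A A"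
proof -
  have "0 \<le> (\<Sum>i<dim_row A. \<Sum>j<dim_col A. (A $$ (i,j))^2)" by (intro sum_nonneg) simp
  thus ?thesis unfolding frob_norm_def frob_inner_def by (simp add: power2_eq_square)
qed

lemma frob_inner_add_left:
  "A \<in> carrier_mat n n \<Longrightarrow> B \<in> carrier_mat n n \<Longrightarrow> frob_inner (A + B) C = frob_inner A C + frob_inner B C"
  unfolding frob_inner_def by (simp add: sum.distrib distrib_right)

lemma frob_inner_diff_left:
  "A \<in> carrier_mat n n \<Longrightarrow> B \<in> carrier_mat n n \<Longrightarrow> frob_inner (A - B) C = frob_inner A C - frob_inner B C"
  unfolding frob_inner_def by (simp add: sum_subtractf left_diff_distrib)

lemma frob_inner_diff_right:
  "A \<in> carrier_mat n n \<Longrightarrow> B \<in> carrier_mat n n \<Longrightarrow> C \<in> carrier_mat n n \<Longrightarrow>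
   frob_inner A (B - C) = frob_inner A B - frob_inner A C"
  unfolding frob_inner_def by (simp add: sum_subtractf right_diff_distrib)

lemma frob_inner_le_amgm:
  assumes A: "A \<in> carrier_mat n n" and B: "B \<in> carrier_mat n n" and t: "0 < t"
  shows "frob_inner A B \<le> (t * (frob_norm A)^2 + (frob_norm B)^2 / t) / 2"
proof -
  have amgm: "a * b \<le> (t * a^2 + b^2 / t) / 2" for a b :: real
  proof -
    have "(t * a^2 + b^2 / t) / 2 - a * b = (t * a - b)^2 / (2 * t)" using t
      by (simp add: field_simps power2_eq_square)
    thus ?thesis using t by (metis diff_ge_0_iff_ge divide_nonneg_pos zero_le_power2 zero_less_mult_iff
        zero_less_numeral)
  qed
  have "frob_inner A B \<le> (\<Sum>i<n. \<Sum>j<n. (t * (A $$ (i,j))^2 + (B $$ (i,j))^2 / t) / 2)"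
    unfolding frob_inner_def using A by (auto intro!: sum_mono amgm)
  also have "\<dots> = (t * frob_inner A A + frob_inner B B / t) / 2"
    unfolding frob_inner_def using A B
    by (simp add: sum.distrib sum_distrib_left sum_divide_distrib add_divide_distrib power2_eq_square)
  finally show ?thesis by (simp add: frob_norm_sq)
qed

lemma frob_inner_proj_mat:
  assumes A: "A \<in> carrier_mat n n" and xc: "\<And>c. c < k \<Longrightarrow> x c \<in> carrier_vec n"
  shows "frob_inner A (proj_mat n k x) = (\<Sum>c<k. x c \<bullet> (A *\<^sub>v x c))"
proof -
  have quad: "x c \<bullet> (A *\<^sub>v x c) = (\<Sum>i<n. \<Sum>l<n. A $$ (i,l) * (x c $ i * x c $ l))" if c: "c < k" for c
    using A xc[OF c]
    by (simp add: scalar_prod_sum[of _ n] mult_mat_vec_index[OF A] sum_distrib_left mult_ac)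
  have "(\<Sum>c<k. x c \<bullet> (A *\<^sub>v x c)) = (\<Sum>c<k. \<Sum>i<n. \<Sum>l<n. A $$ (i,l) * (x c $ i * x c $ l))"
    using quad by simp
  also have "\<dots> = (\<Sum>i<n. \<Sum>l<n. \<Sum>c<k. A $$ (i,l) * (x c $ i * x c $ l))"
    by (subst sum.swap) (rule sum.cong[OF refl], rule sum.swap)
  also have "\<dots> = frob_inner A (proj_mat n k x)"
    unfolding frob_inner_def using A by (simp add: proj_mat_index sum_distrib_left)
  finally show ?thesis ..
qed

lemma trace_proj_le_top_eigenvectors:
  assumes A: "symmetric_mat n A" and ow: "orthonormal n m w" and ou: "orthonormal n m u"
    and eu: "\<forall>c<m. A *\<^sub>v u c = eigs_desc A ! c \<cdot>\<^sub>v u c"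
  shows "frob_inner A (proj_mat n m w) \<le> frob_inner A (proj_mat n m u)"
proof -
  have Am: "A \<in> carrier_mat n n" using symmetric_matD(1)[OF A] .
  have "frob_inner A (proj_mat n m w) \<le> (\<Sum>c<m. eigs_desc A ! c)"
    using ky_fan_inequality[OF A ow] ow by (subst frob_inner_proj_mat[OF Am]) (auto simp: orthonormal_def)
  also have "\<dots> = frob_inner A (proj_mat n m u)"
    using eu ou by (subst frob_inner_proj_mat[OF Am]) (auto simp: orthonormal_def intro!: sum.cong)
  finally show ?thesis .
qed

lemma frob_inner_commute:
  "A \<in> carrier_mat n n \<Longrightarrow> B \<in> carrier_mat n n \<Longrightarrow> frob_inner A B = frob_inner B A"
  unfolding frob_inner_def by (simp add: mult.commute)

lemma frob_inner_proj_mats: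
  assumes ob: "orthonormal n k b" and ec: "\<And>c. c < k' \<Longrightarrow> e c \<in> carrier_vec n"
  shows "frob_inner (proj_mat n k b) (proj_mat n k' e) = (\<Sum>c<k'. \<Sum>a<k. (e c \<bullet> b a)^2)"
  using ec by (simp add: frob_inner_proj_mat[OF proj_mat_carrier] proj_mat_mult_vec[OF ob] fam_proj_quad_form[OF ob])

lemma frob_norm_proj_mat_diff:
  assumes ob: "orthonormal n k b" and oe: "orthonormal n k' e"
  shows "(frob_norm (proj_mat n k b - proj_mat n k' e))^2 = k + k' - 2 * (\<Sum>c<k'. \<Sum>a<k. (e c \<bullet> b a)^2)"
proof -
  have self: "frob_inner (proj_mat n k b) (proj_mat n k b) = k" if o: "orthonormal n k b" for k b
  proof -
    have "frob_inner (proj_mat n k b) (proj_mat n k b) = (\<Sum>c<k. \<Sum>a<k. (b c \<bullet> b a)^2)"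
      using o by (simp add: frob_inner_proj_mats orthonormal_def)
    also have "\<dots> = (\<Sum>c<k. \<Sum>a<k. if a = c then 1 else 0)"
      using o by (intro sum.cong refl) (auto simp: orthonormal_def)
    finally show ?thesis by simp
  qed
  have ec: "\<And>c. c < k' \<Longrightarrow> e c \<in> carrier_vec n" using oe by (simp add: orthonormal_def)
  let ?Pb = "proj_mat n k b" and ?Pe = "proj_mat n k' e"
  have "(frob_norm (?Pb - ?Pe))^2 = frob_inner ?Pb ?Pb - frob_inner ?Pb ?Pe - (frob_inner ?Pe ?Pb - frob_inner ?Pe ?Pe)"
    unfolding frob_norm_sq by (simp add: frob_inner_diff_left[of _ n] frob_inner_diff_right[of _ n])
  also have "frob_inner ?Pe ?Pb = frob_inner ?Pb ?Pe" by (rule frob_inner_commute[of _ n]) auto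
  finally show ?thesis by (simp add: self[OF ob] self[OF oe] frob_inner_proj_mats[OF ob ec])
qed

text \<open>AM-GM \<open>2ab \<le> t a\<^sup>2 + b\<^sup>2/t\<close> with \<open>t = 4/\<delta>\<close>.\<close>

lemma frob_norm_le_of_inner_bound:
  assumes D: "D \<in> carrier_mat n n" and F1: "F1 \<in> carrier_mat n n" and F2: "F2 \<in> carrier_mat n n"
    and dpos: "0 < \<delta>" and g1: "frob_norm F1 \<le> \<gamma>" and g2: "frob_norm F2 \<le> \<gamma>"
    and key: "\<delta> / 2 * (frob_norm D)^2 \<le> frob_inner F1 D + frob_inner F2 D"
  shows "frob_norm D \<le> 4 * \<gamma> / \<delta>"
proof -
  define X where "X = (frob_norm D)^2"
  define t where "t = 4 / \<delta>"
  have t: "0 < t" unfolding t_def using dpos by simp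
  have \<gamma>: "\<gamma> \<ge> 0" using g1 frob_norm_nonneg[of F1] by simp
  have bound: "frob_inner F D \<le> (t * \<gamma>^2 + \<delta> * X / 4) / 2"
    if F: "F \<in> carrier_mat n n" "frob_norm F \<le> \<gamma>" for F
  proof -
    have "(frob_norm F)^2 \<le> \<gamma>^2" using F(2) frob_norm_nonneg[of F] by (intro power_mono) auto
    hence le: "t * (frob_norm F)^2 \<le> t * \<gamma>^2" using t by (intro mult_left_mono) auto
    have "frob_inner F D \<le> (t * (frob_norm F)^2 + X / t) / 2"
      using frob_inner_le_amgm[OF F(1) D t] unfolding X_def .
    also have "\<dots> \<le> (t * \<gamma>^2 + X / t) / 2" using le by (intro divide_right_mono add_right_mono) auto
    also have "X / t = \<delta> * X / 4" unfolding t_def using dpos by simp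
    finally show ?thesis .
  qed
  have "\<delta> / 2 * X \<le> frob_inner F1 D + frob_inner F2 D" using key unfolding X_def .
  hence "\<delta> * X / 4 \<le> t * \<gamma>^2" using bound[OF F1 g1] bound[OF F2 g2] by argo
  hence a: "t * (\<delta> * X / 4) \<le> t * (t * \<gamma>^2)" using t by (intro mult_left_mono) auto
  have b: "t * (\<delta> * X / 4) = X" unfolding t_def using dpos by simp
  have c: "t * (t * \<gamma>^2) = (4 * \<gamma> / \<delta>)^2" unfolding t_def by (simp add: power2_eq_square)
  have "X \<le> (4 * \<gamma> / \<delta>)^2" using a unfolding b c .
  hence "(frob_norm D)^2 \<le> (4 * \<gamma> / \<delta>)^2" unfolding X_def .
  moreover have "0 \<le> 4 * \<gamma> / \<delta>" using \<gamma> dpos by simp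
  ultimately show ?thesis by (rule power2_le_imp_le)
qed

section \<open>Two subspaces and the sum of their projections\<close>

locale two_subspaces =
  fixes n k1 k2 m :: nat and b1 b2 w :: "nat \<Rightarrow> real vec"
  assumes ob1: "orthonormal n k1 b1" and ob2: "orthonormal n k2 b2" and ow: "orthonormal n m w"
    and wb1: "\<forall>j<m. b1 j = w j" and wb2: "\<forall>j<m. b2 j = w j"
    and Wint: "fam_span n k1 b1 \<inter> fam_span n k2 b2 \<subseteq> fam_span n m w"
    and mk1: "m \<le> k1" and mk2: "m \<le> k2"
begin

abbreviation "M \<equiv> proj_mat n k1 b1 + proj_mat n k2 b2"

lemma symmetric_M: "symmetric_mat n M"
  by (intro symmetric_mat_add symmetric_proj_mat)

lemma M_mult_vec: "x \<in> carrier_vec n \<Longrightarrow> M *\<^sub>v x = fam_proj n k1 b1 x + fam_proj n k2 b2 x"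
  by (simp add: add_mult_distrib_mat_vec[of _ n n] proj_mat_mult_vec[OF ob1] proj_mat_mult_vec[OF ob2])

lemma M_on_intersection: "y \<in> fam_span n m w \<Longrightarrow> M *\<^sub>v y = 2 \<cdot>\<^sub>v y"
proof -
  assume y: "y \<in> fam_span n m w"
  have yc: "y \<in> carrier_vec n" using y unfolding fam_span_def by auto
  have "y \<in> fam_span n k1 b1" "y \<in> fam_span n k2 b2"
    using y wb1 wb2 mk1 mk2 fam_span_mono[of m b1 w k1 n] fam_span_mono[of m b2 w k2 n] by auto
  thus ?thesis using M_mult_vec[OF yc] yc fam_proj_id[OF ob1] fam_proj_id[OF ob2] by (intro eq_vecI) auto
qed

lemma complement_coeffs_vanish:
  "\<forall>c. fam_lincomb n (k2 - m) (\<lambda>a. b2 (m + a)) c \<in> fam_span n k1 b1 \<longrightarrow> (\<forall>a<k2 - m. c a = 0)"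
proof -
  define z where "z = (\<lambda>a. b2 (m + a))"
  show ?thesis unfolding z_def[symmetric]
  proof (rule allI, rule impI)
    fix c assume yin: "fam_lincomb n (k2 - m) z c \<in> fam_span n k1 b1"
    define c' where "c' = (\<lambda>j. if j < m then 0 else c (j - m))"
    have ye: "fam_lincomb n (k2 - m) z c = fam_lincomb n k2 b2 c'"
    proof (rule eq_vecI)
      fix i assume "i < dim_vec (fam_lincomb n k2 b2 c')" hence i: "i < n" by simp
      have "(\<Sum>j<k2. c' j * b2 j $ i) = (\<Sum>j<k2. if j < m then 0 else c (j - m) * b2 (m + (j - m)) $ i)"
        unfolding c'_def by (intro sum.cong refl) auto
      also have "\<dots> = (\<Sum>a<k2 - m. c a * b2 (m + a) $ i)" by (rule sum_shift_lower[OF mk2])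
      finally show "fam_lincomb n (k2 - m) z c $ i = fam_lincomb n k2 b2 c' $ i" using i unfolding z_def by simp
    qed simp
    define y where "y = fam_lincomb n k2 b2 c'"
    have yW: "y \<in> fam_span n m w" using Wint yin ye unfolding y_def fam_span_def by auto
    have yb: "\<And>j. j < k2 \<Longrightarrow> b2 j \<bullet> y = c' j" unfolding y_def using orthonormal_coeff[OF ob2] by simp
    have yw: "\<forall>j<m. y \<bullet> w j = 0"
    proof (intro allI impI)
      fix j assume j: "j < m"
      have "y \<bullet> w j = w j \<bullet> y" using ow j unfolding y_def by (simp add: comm_scalar_prod[of _ n] orthonormal_def)
      also have "\<dots> = b2 j \<bullet> y" using wb2 j by simp
      also have "\<dots> = 0" using yb[of j] j mk2 unfolding c'_def by simp
      finally show "y \<bullet> w j = 0" .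
    qed
    have "y \<bullet> y = 0" using parseval[OF ow yW] yw by simp
    hence y0: "y = 0\<^sub>v n" using scalar_prod_self_eq_0D[of y n] unfolding y_def by simp
    show "\<forall>a<k2 - m. c a = 0"
    proof (intro allI impI)
      fix a assume a: "a < k2 - m"
      have "b2 (m + a) \<bullet> y = c' (m + a)" using yb[of "m + a"] a by simp
      moreover have "b2 (m + a) \<bullet> y = 0" using y0 ob2 a unfolding orthonormal_def by simp
      ultimately show "c a = 0" unfolding c'_def by simp
    qed
  qed
qed

lemma dim_sum_le: "k1 + k2 - m \<le> n"
proof -
  have "\<forall>a<k2 - m. b2 (m + a) \<in> carrier_vec n" using ob2 unfolding orthonormal_def by auto
  thus ?thesis using independent_mod_span_card_le[OF ob1 _ complement_coeffs_vanish] mk2 by simp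
qed

lemma sum_in_small_span:
  "\<exists>L F. orthonormal n L F \<and> L \<le> k1 + k2 - m \<and> fam_span n k1 b1 \<subseteq> fam_span n L F \<and> fam_span n k2 b2 \<subseteq> fam_span n L F"
proof -
  define xs where "xs = map (\<lambda>a. b2 (m + a)) [0..<k2 - m]"
  have xs: "set xs \<subseteq> carrier_vec n" using ob2 unfolding xs_def orthonormal_def by auto
  obtain L F where h: "k1 \<le> L" "L \<le> k1 + length xs" "orthonormal n L F" "\<forall>j<k1. F j = b1 j" "set xs \<subseteq> fam_span n L F"
    using orthonormal_extend_list[OF ob1 xs] by blast
  have s1: "fam_span n k1 b1 \<subseteq> fam_span n L F" using h by (intro fam_span_mono) auto
  have s2: "fam_span n k2 b2 \<subseteq> fam_span n L F"
  proof (rule fam_span_subset[OF lin_closed_fam_span])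
    fix j assume j: "j < k2"
    show "b2 j \<in> fam_span n L F"
    proof (cases "j < m")
      case True
      hence "b2 j = b1 j" using wb1 wb2 by simp
      moreover have "b1 j \<in> fam_span n k1 b1" using orthonormal_in_fam_span[OF ob1] True mk1 by simp
      ultimately show ?thesis using s1 by auto
    next
      case False
      hence "b2 j \<in> set xs" unfolding xs_def using j by (auto intro!: image_eqI[of _ _ "j - m"])
      thus ?thesis using h by auto
    qed
  qed
  show ?thesis using h s1 s2 mk2 unfolding xs_def by (intro exI[of _ L] exI[of _ F]) auto
qed

lemma eigenvalue_quad_form:
  assumes x: "x \<in> carrier_vec n" and ev: "M *\<^sub>v x = e \<cdot>\<^sub>v x"
  shows "e * (x \<bullet> x) = (\<Sum>j<k1. (x \<bullet> b1 j)^2) + (\<Sum>j<k2. (x \<bullet> b2 j)^2)"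
proof -
  have "e * (x \<bullet> x) = x \<bullet> (M *\<^sub>v x)" using ev x by simp
  also have "\<dots> = x \<bullet> fam_proj n k1 b1 x + x \<bullet> fam_proj n k2 b2 x"
    using M_mult_vec[OF x] x by (simp add: scalar_prod_add_distrib[of _ n])
  finally show ?thesis using fam_proj_quad_form[OF ob1 x] fam_proj_quad_form[OF ob2 x] by simp
qed

lemma eigenvalue_range:
  assumes x: "x \<in> carrier_vec n" "x \<noteq> 0\<^sub>v n" and ev: "M *\<^sub>v x = e \<cdot>\<^sub>v x"
  shows "0 \<le> e \<and> e \<le> 2"
proof -
  have pos: "x \<bullet> x > 0" using scalar_prod_self_pos[OF x] .
  have "0 \<le> e * (x \<bullet> x)" "e * (x \<bullet> x) \<le> 2 * (x \<bullet> x)"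
    using eigenvalue_quad_form[OF x(1) ev] bessel_inequality[OF ob1 x(1)] bessel_inequality[OF ob2 x(1)]
    by (auto intro!: add_nonneg_nonneg sum_nonneg)
  thus ?thesis using pos by (simp add: zero_le_mult_iff)
qed

lemma eigenvalue_two_in_intersection:
  assumes x: "x \<in> carrier_vec n" and ev: "M *\<^sub>v x = 2 \<cdot>\<^sub>v x"
  shows "x \<in> fam_span n m w"
proof -
  have "(\<Sum>j<k1. (x \<bullet> b1 j)^2) = x \<bullet> x" "(\<Sum>j<k2. (x \<bullet> b2 j)^2) = x \<bullet> x"
    using eigenvalue_quad_form[OF x ev] bessel_inequality[OF ob1 x] bessel_inequality[OF ob2 x] by auto
  thus ?thesis using fam_proj_eq_self_iff[OF ob1 x] fam_proj_eq_self_iff[OF ob2 x] Wint by auto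
qed

text \<open>The eigenvalues of \<open>M\<close> in \<open>(0, 2)\<close> come in pairs \<open>e, 2 - e\<close>: if \<open>M x = e x\<close>, then
  \<open>P\<^sub>1 P\<^sub>2 x = (e - 1) P\<^sub>1 x\<close> and \<open>P\<^sub>2 P\<^sub>1 x = (e - 1) P\<^sub>2 x\<close>, so \<open>P\<^sub>1 x - P\<^sub>2 x\<close> is an
  eigenvector for \<open>2 - e\<close>.\<close>

lemma eigenvalue_reflect:
  assumes x: "x \<in> carrier_vec n" "x \<noteq> 0\<^sub>v n" and ev: "M *\<^sub>v x = e \<cdot>\<^sub>v x" and e: "0 < e" "e < 2"
  defines "y \<equiv> fam_proj n k1 b1 x - fam_proj n k2 b2 x"
  shows "y \<in> carrier_vec n" "y \<noteq> 0\<^sub>v n" "M *\<^sub>v y = (2 - e) \<cdot>\<^sub>v y"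
proof -
  define p1 where "p1 = fam_proj n k1 b1 x"
  define p2 where "p2 = fam_proj n k2 b2 x"
  have c: "p1 \<in> carrier_vec n" "p2 \<in> carrier_vec n" unfolding p1_def p2_def by auto
  show yc: "y \<in> carrier_vec n" unfolding y_def by simp
  have sum: "p1 + p2 = e \<cdot>\<^sub>v x" using M_mult_vec[OF x(1)] ev unfolding p1_def p2_def by simp
  have sum_i: "e * x $ i = p1 $ i + p2 $ i" if "i < n" for i
    using arg_cong[OF sum, of "\<lambda>v. v $ i"] c x(1) that by simp
  have p2e: "p2 = e \<cdot>\<^sub>v x - p1" and p1e: "p1 = e \<cdot>\<^sub>v x - p2"
    using c x(1) by (auto intro!: eq_vecI simp: sum_i)
  have "fam_proj n k1 b1 y = p1 - fam_proj n k1 b1 (e \<cdot>\<^sub>v x - p1)"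
    using c x(1) unfolding y_def p1_def p2_def[symmetric]
    by (simp add: fam_proj_diff[OF ob1] fam_proj_idem[OF ob1] p2e[unfolded p1_def])
  also have "\<dots> = (2 - e) \<cdot>\<^sub>v p1"
    using c x(1) by (simp add: fam_proj_diff[OF ob1] fam_proj_smult[OF ob1] fam_proj_idem[OF ob1] p1_def)
      (intro eq_vecI, auto simp: algebra_simps)
  finally have P1y: "fam_proj n k1 b1 y = (2 - e) \<cdot>\<^sub>v p1" .
  have "fam_proj n k2 b2 y = fam_proj n k2 b2 (e \<cdot>\<^sub>v x - p2) - p2"
    using c x(1) unfolding y_def p2_def p1_def[symmetric]
    by (simp add: fam_proj_diff[OF ob2] fam_proj_idem[OF ob2] p1e[unfolded p2_def])
  also have "\<dots> = (e - 2) \<cdot>\<^sub>v p2"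
    using c x(1) by (simp add: fam_proj_diff[OF ob2] fam_proj_smult[OF ob2] fam_proj_idem[OF ob2] p2_def)
      (intro eq_vecI, auto simp: algebra_simps)
  finally have P2y: "fam_proj n k2 b2 y = (e - 2) \<cdot>\<^sub>v p2" .
  show "M *\<^sub>v y = (2 - e) \<cdot>\<^sub>v y"
    unfolding M_mult_vec[OF yc] P1y P2y unfolding y_def p1_def[symmetric] p2_def[symmetric]
    using c by (intro eq_vecI) (auto simp: algebra_simps)
  show "y \<noteq> 0\<^sub>v n"
  proof
    assume y0: "y = 0\<^sub>v n"
    have "(2 - e) * (x \<bullet> p1) = x \<bullet> fam_proj n k1 b1 y" using P1y x(1) c by simp
    also have "\<dots> = 0" using fam_proj_symmetric[OF ob1 x(1) yc] y0 by simp
    finally have "x \<bullet> p1 = 0" using e by simp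
    moreover have "(e - 2) * (x \<bullet> p2) = x \<bullet> fam_proj n k2 b2 y" using P2y x(1) c by simp
    hence "x \<bullet> p2 = 0" using fam_proj_symmetric[OF ob2 x(1) yc] y0 e by simp
    moreover have "e * (x \<bullet> x) = x \<bullet> p1 + x \<bullet> p2"
      using arg_cong[OF sum, of "\<lambda>v. x \<bullet> v"] x(1) c by (simp add: scalar_prod_add_distrib[of _ n])
    ultimately show False using scalar_prod_self_pos[OF x] e by simp
  qed
qed

lemma eigs_desc_M_zero:
  assumes k: "k < n" "k1 + k2 - m \<le> k"
  shows "eigs_desc M ! k = 0"
proof (rule ccontr)
  assume ne: "eigs_desc M ! k \<noteq> 0"
  obtain v where ov: "orthonormal n n v" and ev: "\<forall>k<n. M *\<^sub>v v k = eigs_desc M ! k \<cdot>\<^sub>v v k"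
    and len: "length (eigs_desc M) = n" and srt: "sorted_wrt (\<ge>) (eigs_desc M)"
    using spectral_theorem[OF symmetric_M] by blast
  have vc: "\<And>i. i < n \<Longrightarrow> v i \<in> carrier_vec n" using ov by (simp add: orthonormal_def)
  define d where "d = k1 + k2 - m"
  obtain L F where F: "orthonormal n L F" "L \<le> d" "fam_span n k1 b1 \<subseteq> fam_span n L F"
    "fam_span n k2 b2 \<subseteq> fam_span n L F"
    using sum_in_small_span unfolding d_def by blast
  have "0 < eigs_desc M ! k"
    using eigenvalue_range[OF vc orthonormal_nonzero[OF ov] ev[rule_format]] k ne by fastforce
  have vin: "v i \<in> fam_span n L F" if i: "i < Suc d" for i
  proof -
    have ik: "i \<le> k" "i < n" using i k unfolding d_def by auto
    have "eigs_desc M ! i \<ge> eigs_desc M ! k"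
      using sorted_wrt_nth_less[OF srt, of i k] ik k len by (cases "i = k") auto
    hence pos: "eigs_desc M ! i > 0" using \<open>0 < eigs_desc M ! k\<close> by simp
    have "v i = (1 / eigs_desc M ! i) \<cdot>\<^sub>v (M *\<^sub>v v i)"
      using ev ik pos vc[OF ik(2)] by (simp add: smult_smult_assoc)
    also have "\<dots> = (1 / eigs_desc M ! i) \<cdot>\<^sub>v (fam_proj n k1 b1 (v i) + fam_proj n k2 b2 (v i))"
      using M_mult_vec[OF vc[OF ik(2)]] by simp
    also have "\<dots> \<in> fam_span n L F"
      using F(3,4) fam_proj_in_span lin_closed_fam_span[of n L F] unfolding lin_closed_def by blast
    finally show ?thesis .
  qed
  have "orthonormal n (Suc d) v" using ov k unfolding orthonormal_def d_def by auto
  hence "Suc d \<le> L" using orthonormal_in_span_card_le[OF _ F(1)] vin by blast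
  thus False using F(2) by simp
qed

lemma quad_form_M_orth_intersection:
  assumes m0: "0 < m" and del: "\<delta> < eigs_desc M ! (k1 + k2 - m - 1)"
    and x: "x \<in> carrier_vec n" and xw: "\<forall>j<m. x \<bullet> w j = 0"
  shows "x \<bullet> (M *\<^sub>v x) \<le> (2 - \<delta>) * (x \<bullet> x)"
proof -
  obtain v where ov: "orthonormal n n v" and ev: "\<forall>k<n. M *\<^sub>v v k = eigs_desc M ! k \<cdot>\<^sub>v v k"
    and len: "length (eigs_desc M) = n" and srt: "sorted_wrt (\<ge>) (eigs_desc M)"
    using spectral_theorem[OF symmetric_M] by blast
  let ?e = "\<lambda>k. eigs_desc M ! k"
  have vc: "\<And>i. i < n \<Longrightarrow> v i \<in> carrier_vec n" using ov by (simp add: orthonormal_def)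
  have range: "0 \<le> ?e k \<and> ?e k \<le> 2" if "k < n" for k
    using eigenvalue_range[OF vc orthonormal_nonzero[OF ov] ev[rule_format]] that by blast
  define d where "d = k1 + k2 - m"
  have d: "1 \<le> d" "d \<le> n" using m0 mk1 mk2 dim_sum_le unfolding d_def by auto
  have dl: "d - 1 < n" using d by simp
  have "\<delta> < ?e (d - 1)" using del unfolding d_def .
  hence "\<delta> < 2" using range[OF dl] by simp
  have "?e k \<le> 2 - \<delta>" if k: "k < n" and xv: "x \<bullet> v k \<noteq> 0" for k
  proof -
    have "v k \<notin> fam_span n m w" using xv parseval_scalar_prod[OF ow x] xw by auto
    hence ne2: "?e k \<noteq> 2" using eigenvalue_two_in_intersection[OF vc[OF k]] ev k by auto
    show ?thesis
    proof (cases "?e k = 0")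
      case True thus ?thesis using \<open>\<delta> < 2\<close> by simp
    next
      case False
      hence e: "0 < ?e k" "?e k < 2" using range[OF k] ne2 by auto
      obtain l where l: "l < n" "?e l = 2 - ?e k"
        using eigenvalue_in_eigenbasis[OF symmetric_M ov ev eigenvalue_reflect[OF vc[OF k]
              orthonormal_nonzero[OF ov k] ev[rule_format, OF k] e]] by blast
      have "\<not> k1 + k2 - m \<le> l" using eigs_desc_M_zero[OF l(1)] l e by auto
      hence "l < d" unfolding d_def by simp
      hence "?e l \<ge> ?e (d - 1)"
        using sorted_wrt_nth_less[OF srt, of l "d - 1"] d len by (cases "l = d - 1") auto
      thus ?thesis using l del unfolding d_def by simp
    qed
  qed
  hence "\<forall>k<n. ?e k * (x \<bullet> v k)^2 \<le> (2 - \<delta>) * (x \<bullet> v k)^2"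
    by (metis mult_right_mono power_zero_numeral mult_zero_right zero_le_power2 order_refl)
  hence "x \<bullet> (M *\<^sub>v x) \<le> (\<Sum>k<n. (2 - \<delta>) * (x \<bullet> v k)^2)"
    unfolding quad_form_eigen_expansion[OF symmetric_M ov ev x] by (intro sum_mono) auto
  also have "\<dots> = (2 - \<delta>) * (x \<bullet> x)"
    using parseval[OF ov] orthonormal_full_span[OF ov] x by (simp add: sum_distrib_left)
  finally show ?thesis .
qed

lemma trace_M_intersection: "frob_inner M (proj_mat n m w) = 2 * m"
proof -
  have "frob_inner M (proj_mat n m w) = (\<Sum>a<m. w a \<bullet> (M *\<^sub>v w a))"
    using ow by (intro frob_inner_proj_mat) (auto simp: orthonormal_def)
  also have "\<dots> = (\<Sum>a<m. 2)"
    using M_on_intersection[OF orthonormal_in_fam_span[OF ow]] ow by (intro sum.cong refl) (auto simp: orthonormal_def)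
  finally show ?thesis by simp
qed

lemma quad_form_M_unit_le:
  assumes m0: "0 < m" and del: "\<delta> < eigs_desc M ! (k1 + k2 - m - 1)"
    and x: "x \<in> carrier_vec n" "x \<bullet> x = 1"
  shows "x \<bullet> (M *\<^sub>v x) \<le> 2 - \<delta> * (1 - (\<Sum>a<m. (x \<bullet> w a)^2))"
proof -
  define T where "T = (\<Sum>a<m. (x \<bullet> w a)^2)"
  define q where "q = fam_proj n m w x"
  define r where "r = x - q"
  have qc: "q \<in> carrier_vec n" and rc: "r \<in> carrier_vec n" unfolding r_def q_def using x by auto
  have xqr: "x = q + r" unfolding r_def using x qc by (intro eq_vecI) auto
  have rq: "q \<bullet> r = 0" using fam_proj_residual_orth_span[OF ow x(1) fam_proj_in_span] qc rc
    unfolding r_def q_def by (simp add: comm_scalar_prod[of _ n])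
  have Mr: "M *\<^sub>v r \<in> carrier_vec n" by (rule mult_mat_vec_carrier[of _ n n]) (simp_all add: rc)
  have Mq: "M *\<^sub>v q = 2 \<cdot>\<^sub>v q" unfolding q_def by (rule M_on_intersection[OF fam_proj_in_span])
  have "x \<bullet> (M *\<^sub>v x) = (q + r) \<bullet> (2 \<cdot>\<^sub>v q + M *\<^sub>v r)"
    unfolding xqr using qc rc Mq by (simp add: mult_add_distrib_mat_vec[of _ n n])
  also have "\<dots> = q \<bullet> (2 \<cdot>\<^sub>v q) + q \<bullet> (M *\<^sub>v r) + (r \<bullet> (2 \<cdot>\<^sub>v q) + r \<bullet> (M *\<^sub>v r))"
    using qc rc Mr by (simp add: add_scalar_prod_distrib[of _ n] scalar_prod_add_distrib[of _ n])
  also have "\<dots> = 2 * (q \<bullet> q) + (q \<bullet> (M *\<^sub>v r) + r \<bullet> (M *\<^sub>v r))"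
    using qc rc rq by (simp add: comm_scalar_prod[of r n])
  also have "q \<bullet> (M *\<^sub>v r) = 0"
    using symmetric_mat_scalar_prod[OF symmetric_M qc rc] Mq qc rc rq by (simp add: comm_scalar_prod[of r n])
  also have "q \<bullet> q = x \<bullet> q"
    unfolding xqr using qc rc rq by (simp add: add_scalar_prod_distrib[of _ n] comm_scalar_prod[of r n])
  also have "\<dots> = T" unfolding q_def T_def by (rule fam_proj_quad_form[OF ow x(1)])
  finally have e1: "x \<bullet> (M *\<^sub>v x) = 2 * T + r \<bullet> (M *\<^sub>v r)" by simp
  have e3: "r \<bullet> r = 1 - T"
    using orthonormal_pythagoras[OF ow x(1)] x(2) unfolding r_def q_def T_def by simp
  have "\<forall>j<m. r \<bullet> w j = 0" unfolding r_def q_def using fam_proj_residual_orth[OF ow x(1)] by simp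
  hence e4: "r \<bullet> (M *\<^sub>v r) \<le> (2 - \<delta>) * (r \<bullet> r)" using quad_form_M_orth_intersection[OF m0 del rc] by simp
  have "x \<bullet> (M *\<^sub>v x) \<le> 2 * T + (2 - \<delta>) * (1 - T)" using e1 e3 e4 by simp
  also have "\<dots> = 2 - \<delta> * (1 - T)" by (simp add: algebra_simps)
  finally show ?thesis unfolding T_def .
qed

lemma trace_M_orthonormal_le:
  assumes ou: "orthonormal n m u" and del: "\<delta> < eigs_desc M ! (k1 + k2 - m - 1)"
  shows "frob_inner M (proj_mat n m u) \<le> 2 * m - \<delta> * (m - frob_inner (proj_mat n m w) (proj_mat n m u))"
proof -
  have uc: "\<And>c. c < m \<Longrightarrow> u c \<in> carrier_vec n" using ou by (simp add: orthonormal_def)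
  have "(\<Sum>c<m. u c \<bullet> (M *\<^sub>v u c)) \<le> (\<Sum>c<m. 2 - \<delta> * (1 - (\<Sum>a<m. (u c \<bullet> w a)^2)))"
    using quad_form_M_unit_le[OF _ del uc] ou by (intro sum_mono) (auto simp: orthonormal_def)
  also have "\<dots> = 2 * m - \<delta> * (m - frob_inner (proj_mat n m w) (proj_mat n m u))"
    using frob_inner_proj_mats[OF ow uc] by (simp add: sum_subtractf sum_distrib_left algebra_simps)
  finally show ?thesis using frob_inner_proj_mat[OF proj_mat_carrier uc] by (simp add: frob_inner_proj_mat uc)
qed

theorem intersection_projection_perturbation:
  assumes ob1': "orthonormal n k1' b1'" and ob2': "orthonormal n k2' b2'" and ou: "orthonormal n m u"
    and eu: "\<forall>c<m. (proj_mat n k1' b1' + proj_mat n k2' b2') *\<^sub>v u c =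
      eigs_desc (proj_mat n k1' b1' + proj_mat n k2' b2') ! c \<cdot>\<^sub>v u c"
    and dpos: "0 < \<delta>" and del: "\<delta> < eigs_desc M ! (k1 + k2 - m - 1)"
    and g1: "frob_norm (proj_mat n k1 b1 - proj_mat n k1' b1') \<le> \<gamma>"
    and g2: "frob_norm (proj_mat n k2 b2 - proj_mat n k2' b2') \<le> \<gamma>"
  shows "frob_norm (proj_mat n m w - proj_mat n m u) \<le> 4 * \<gamma> / \<delta>"
proof -
  let ?P1 = "proj_mat n k1 b1" and ?P2 = "proj_mat n k2 b2"
  let ?P1' = "proj_mat n k1' b1'" and ?P2' = "proj_mat n k2' b2'"
  let ?Q = "proj_mat n m w" and ?Q' = "proj_mat n m u"
  define S where "S = frob_inner ?Q ?Q'"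
  have uc: "\<And>c. c < m \<Longrightarrow> u c \<in> carrier_vec n" using ou by (simp add: orthonormal_def)
  have "(frob_norm (?Q - ?Q'))^2 = 2 * (m - S)"
    using frob_norm_proj_mat_diff[OF ow ou] frob_inner_proj_mats[OF ow uc] unfolding S_def by simp
  hence "\<delta> / 2 * (frob_norm (?Q - ?Q'))^2 = \<delta> * (m - S)" by simp
  also have "\<dots> \<le> frob_inner (?P1 + ?P2 - (?P1' + ?P2')) (?Q - ?Q')"
    using trace_M_intersection trace_M_orthonormal_le[OF ou del, folded S_def]
      trace_proj_le_top_eigenvectors[OF symmetric_mat_add[OF symmetric_proj_mat symmetric_proj_mat] ow ou eu]
    by (simp add: frob_inner_diff_left[of _ n] frob_inner_diff_right[of _ n])
  also have "?P1 + ?P2 - (?P1' + ?P2') = (?P1 - ?P1') + (?P2 - ?P2')" by (intro eq_matI) auto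
  also have "frob_inner \<dots> (?Q - ?Q') = frob_inner (?P1 - ?P1') (?Q - ?Q') + frob_inner (?P2 - ?P2') (?Q - ?Q')"
    by (rule frob_inner_add_left[of _ n]) auto
  finally have key: "\<delta> / 2 * (frob_norm (?Q - ?Q'))^2 \<le> \<dots>" .
  have "?Q - ?Q' \<in> carrier_mat n n" "?P1 - ?P1' \<in> carrier_mat n n" "?P2 - ?P2' \<in> carrier_mat n n" by auto
  thus ?thesis using frob_norm_le_of_inner_bound[OF _ _ _ dpos g1 g2 key] by blast
qed

end

lemma subspace_intersection_perturbation:
  assumes W: "W = V1 \<inter> V2" and V1: "rsubspace n V1" and V2: "rsubspace n V2" and dW: "rdim n W = m"
    and d1: "rdim n V1 = k1" and d2: "rdim n V2 = k2"
    and dpos: "0 < \<delta>" and del: "eig (k1 + k2 - m) (proj n V1 + proj n V2) > \<delta>"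
    and g1: "frob_norm (proj n V1 - proj n V1') \<le> \<gamma>" and g2: "frob_norm (proj n V2 - proj n V2') \<le> \<gamma>"
    and V1': "rsubspace n V1'" and V2': "rsubspace n V2'"
    and ue: "\<forall>i<m. u i \<in> carrier_vec n \<and>
      (proj n V1' + proj n V2') *\<^sub>v u i = eig (i + 1) (proj n V1' + proj n V2') \<cdot>\<^sub>v u i"
    and uo: "\<forall>i<m. \<forall>j<m. u i \<bullet> u j = (if i = j then 1 else 0)"
  shows "frob_norm (proj n W - proj n (rspan n (u ` {..<m}))) \<le> 4 * \<gamma> / \<delta>"
proof -
  have VW: "rsubspace n (V1 \<inter> V2)" using V1 V2 by (simp add: rsubspace_iff_lin_closed lin_closed_Int)
  obtain w where Bw: "orthonormal n m w" and sw: "fam_span n m w = V1 \<inter> V2" and wW: "\<forall>j<m. w j \<in> V1 \<inter> V2"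
    using orthonormal_basis_exists[OF VW] dW W by auto
  obtain b1 where B1: "orthonormal n k1 b1" "\<forall>j<m. b1 j = w j" "fam_span n k1 b1 = V1" "m \<le> k1"
    using orthonormal_basis_extend[OF V1 Bw] wW d1 by auto
  obtain b2 where B2: "orthonormal n k2 b2" "\<forall>j<m. b2 j = w j" "fam_span n k2 b2 = V2" "m \<le> k2"
    using orthonormal_basis_extend[OF V2 Bw] wW d2 by auto
  obtain b1' where B1': "orthonormal n (rdim n V1') b1'" "fam_span n (rdim n V1') b1' = V1'"
    using orthonormal_basis_exists[OF V1'] by auto
  obtain b2' where B2': "orthonormal n (rdim n V2') b2'" "fam_span n (rdim n V2') b2' = V2'"
    using orthonormal_basis_exists[OF V2'] by auto
  interpret two_subspaces n k1 k2 m b1 b2 w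
    using B1 B2 Bw sw by unfold_locales auto
  have ou: "orthonormal n m u" using ue uo unfolding orthonormal_def by auto
  have p: "proj n V1 = proj_mat n k1 b1" "proj n V2 = proj_mat n k2 b2"
    "proj n V1' = proj_mat n (rdim n V1') b1'" "proj n V2' = proj_mat n (rdim n V2') b2'"
    "proj n W = proj_mat n m w" "proj n (rspan n (u ` {..<m})) = proj_mat n m u"
    using proj_fam_span[OF B1(1)] proj_fam_span[OF B2(1)] proj_fam_span[OF B1'(1)] proj_fam_span[OF B2'(1)]
      proj_fam_span[OF Bw] proj_fam_span[OF ou]
    unfolding B1(3) B2(3) B1'(2) B2'(2) sw rspan_eq_fam_span[OF ou] W by simp_all
  show ?thesis
    using intersection_projection_perturbation[OF B1'(1) B2'(1) ou _ dpos _ g1[unfolded p] g2[unfolded p]]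
      ue del unfolding p eig_def by simp
qed

theorem mainTheorem9:
  shows "\<exists>C::real. \<forall>(n::nat) (k1::nat) (k2::nat) (m::nat) V1 V2 W V1' V2' (\<delta>::real) (\<gamma>::real)
           (u :: nat \<Rightarrow> real vec).
     rsubspace n V1 \<and> rsubspace n V2 \<and> rdim n V1 = k1 \<and> rdim n V2 = k2 \<and>
     W = V1 \<inter> V2 \<and> rdim n W = m \<and>
     \<delta> > 0 \<and> eig (k1 + k2 - m) (proj n V1 + proj n V2) > \<delta> \<and>
     rsubspace n V1' \<and> rsubspace n V2' \<and> rdim n V1' = k1 \<and> rdim n V2' = k2 \<and>
     frob_norm (proj n V1 - proj n V1') \<le> \<gamma> \<and> frob_norm (proj n V2 - proj n V2') \<le> \<gamma> \<and>
     (\<forall>i<m. u i \<in> carrier_vec n \<and>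
        (proj n V1' + proj n V2') *\<^sub>v u i = eig (i + 1) (proj n V1' + proj n V2') \<cdot>\<^sub>v u i) \<and>
     (\<forall>i<m. \<forall>j<m. u i \<bullet> u j = (if i = j then 1 else 0))
     \<longrightarrow> frob_norm (proj n W - proj n (rspan n (u ` {..<m}))) \<le> C * \<gamma> / \<delta>"
  by (intro exI[of _ 4] allI impI; elim conjE; rule subspace_intersection_perturbation; assumption)

end
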